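(* With notation as below, the sequence $C$ given by $C_0=Q$, $C_1=\mathbb{F}_1\oplus\mathbb{G}_1$, $C_i=\mathbb{F}_i\oplus\mathbb{G}_i\oplus\mathbb{G}_{i-1}$ for $i\ge2$ (the last summand with internal degree shifted up by one), with differential $d_1(f,g)=\partial^{\mathbb{F}}(f)+\partial^{\mathbb{G}}(g)$, $d_2(f,g,h)=(\partial^{\mathbb{F}}f+\Phi_1(h),\ \partial^{\mathbb{G}}g-zh)$, and $d_i(f,g,h)=(\partial^{\mathbb{F}}f+\Phi_{i-1}(h),\ \partial^{\mathbb{G}}g-zh,\ -\partial^{\mathbb{G}}h)$ for $i\ge3$, is a complex and is the minimal $Q$-free resolution of $Q/I_\Gamma$. (Equivalently, $C$ is the mapping cone of the chain map $\Psi:\mathrm{Cone}(\mu^z)\to\mathbb{F}$ with $\Psi_0=(\partial^{\mathbb{G}}_1,0)$ and $\Psi_i=(0,\Phi_i)$ for $i>0$, where $\mu^z$ is multiplication by $z$ on $\Sigma^{-1}\mathbb{G}_{>0}$ and $\mathrm{Cone}(\mu^z)$ is the minimal free resolution of $J/zJ\cong I_\Gamma/I$.)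
   Context: Let $n\ge1$, $a_1,\ldots,a_n\ge0$, $Q=\Bbbk[z,x_1,\ldots,x_n,y_{i,j}\ (1\le i\le n,1\le j\le a_i)]$ over a field $\Bbbk$, $\Gamma$ the tree with edges $\{z,x_i\}$ and $\{x_i,y_{i,j}\}$ (every diameter-four tree can be labeled so), $I=(zx_1,\ldots,zx_n)$, $J=(x_iy_{i,j})$, $I_\Gamma=I+J$. Order $G(I)$ by $zx_i<zx_j$ iff $i<j$ and $G(J)$ by $x_iy_{i,\ell}<x_jy_{j,p}$ iff $i<j$, or $i=j$ and $\ell<p$. For a monomial ideal with ordered generating set and $U$ a set of generators, $m_U=\mathrm{lcm}(U)$; the Taylor resolution has basis $e_U$ in degree $|U|$ and differential $\partial(e_U)=\sum_{u\in U}(-1)^{|\{v\in U:v<u\}|}\frac{m_U}{m_{U\setminus\{u\}}}e_{U\setminus\{u\}}$. Let $\mathbb{F}$ (basis $f_V$, $V\subseteq G(I)$) and $\mathbb{G}$ (basis $g_W$, $W\subseteq G(J)$) be the Taylor resolutions of $Q/I$ and $Q/J$. For $W\subseteq G(J)$, let $W_z$ be the multiset $\{zx_i: x_iy_{i,j}\in W\}$ (ordered as in $W$), and $y_W=\mathrm{lcm}\{y_{i,j}:x_iy_{i,j}\in W\}$. Define $\Phi:\mathbb{G}\to\mathbb{F}$ by $\Phi_0(1)=z$ and $\Phi(g_W)=y_Wf_{W_z}$ for $W\ne\emptyset$, where $f_{W_z}:=0$ if some $zx_i$ occurs more than once in $W_z$; $\Phi$ is a chain map lifting $Q/J\xrightarrow{\cdot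 z}Q/I$. *)

theory Defs
  imports Main "HOL-Library.Poly_Mapping" "HOL-Library.Product_Lexorder"
begin

datatype var = Zv | Xv nat | Yv nat nat

text \<open>The polynomial ring Q over a field k: finitely supported functions from
  monomials (exponent vectors var =>0 nat) to coefficients.\<close>
type_synonym 'k qpoly = "(var \<Rightarrow>\<^sub>0 nat) \<Rightarrow>\<^sub>0 'k"

definition Var :: "var \<Rightarrow> 'k::field qpoly" where
  "Var v = Poly_Mapping.single (Poly_Mapping.single v 1) 1"

definition mono :: "(var \<Rightarrow> nat) \<Rightarrow> 'k::field qpoly" where
  "mono e = (\<Prod>v\<in>{v. e v \<noteq> 0}. Var v ^ e v)"

text \<open>Exponent of lcm of the monomials g u, u in U (exponent 0 for U empty).\<close>
definition mexp :: "('g \<Rightarrow> var \<Rightarrow> nat) \<Rightarrow> 'g set \<Rightarrow> var \<Rightarrow> nat" where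
  "mexp g U = (\<lambda>v. Max (insert 0 ((\<lambda>u. g u v) ` U)))"

text \<open>Taylor resolution: coefficient of basis element e_U' in the boundary of e_U,
  for generators g ordered by the linear order of 'g.\<close>
definition taylor_entry :: "('g::linorder \<Rightarrow> var \<Rightarrow> nat) \<Rightarrow> 'g set \<Rightarrow> 'g set \<Rightarrow> 'k::field qpoly" where
  "taylor_entry g U U' =
     (\<Sum>u\<in>U. if U' = U - {u}
              then (-1) ^ card {v\<in>U. v < u} * mono (\<lambda>x. mexp g U x - mexp g (U - {u}) x)
              else 0)"

text \<open>Generators: zx_i of I indexed by i, x_i y_ij of J indexed by (i,j) (lex order).\<close>
definition gI :: "nat \<Rightarrow> var \<Rightarrow> nat" where
  "gI i = (\<lambda>v. if v = Zv \<or> v = Xv i then 1 else 0)"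

definition gJ :: "nat \<times> nat \<Rightarrow> var \<Rightarrow> nat" where
  "gJ p = (\<lambda>v. if v = Xv (fst p) \<or> v = Yv (fst p) (snd p) then 1 else 0)"

definition GI :: "nat \<Rightarrow> nat set" where
  "GI n = {1..n}"

definition GJ :: "nat \<Rightarrow> (nat \<Rightarrow> nat) \<Rightarrow> (nat \<times> nat) set" where
  "GJ n a = Sigma {1..n} (\<lambda>i. {1..a i})"

definition ideal_gen :: "'k::field qpoly set \<Rightarrow> 'k qpoly set" where
  "ideal_gen S = {p. \<exists>c. p = (\<Sum>s\<in>S. c s * s)}"

definition I_Gamma_gens :: "nat \<Rightarrow> (nat \<Rightarrow> nat) \<Rightarrow> 'k::field qpoly set" where
  "I_Gamma_gens n a = (\<lambda>i. mono (gI i)) ` GI n \<union> (\<lambda>p. mono (gJ p)) ` GJ n a"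

text \<open>Basis of C_i: CF V = f_V in F_i, CG W = g_W in G_i, CH W = g_W in the summand G_(i-1).
  C_0 = Q with basis element CF {}.\<close>
datatype cb = CF "nat set" | CG "(nat \<times> nat) set" | CH "(nat \<times> nat) set"

definition cbasis :: "nat \<Rightarrow> (nat \<Rightarrow> nat) \<Rightarrow> nat \<Rightarrow> cb set" where
  "cbasis n a i =
     (if i = 0 then {CF {}}
      else CF ` {V. V \<subseteq> GI n \<and> card V = i}
         \<union> CG ` {W. W \<subseteq> GJ n a \<and> card W = i}
         \<union> (if 2 \<le> i then CH ` {W. W \<subseteq> GJ n a \<and> card W = i - 1} else {}))"

definition yW :: "(nat \<times> nat) set \<Rightarrow> 'k::field qpoly" where
  "yW W = mono (\<lambda>v. if \<exists>p\<in>W. v = Yv (fst p) (snd p) then 1 else 0)"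

text \<open>Phi(g_W) = y_W f_{W_z}: coefficient on f_V (zero if W_z has repetitions).\<close>
definition Phi_entry :: "(nat \<times> nat) set \<Rightarrow> nat set \<Rightarrow> 'k::field qpoly" where
  "Phi_entry W V = (if inj_on fst W \<and> V = fst ` W then yW W else 0)"

text \<open>Matrix of the differential d: coefficient of basis element b' of C_(i-1)
  in d_i(b) for b a basis element of C_i.\<close>
fun cdiff :: "cb \<Rightarrow> cb \<Rightarrow> 'k::field qpoly" where
  "cdiff (CF V) (CF V') = taylor_entry gI V V'"
| "cdiff (CG W) (CG W') = taylor_entry gJ W W'"
| "cdiff (CG W) (CF V') = (if card W = 1 \<and> V' = {} then taylor_entry gJ W {} else 0)"
| "cdiff (CH W) (CF V') = Phi_entry W V'"
| "cdiff (CH W) (CG W') = (if W' = W then - Var Zv else 0)"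
| "cdiff (CH W) (CH W') = - taylor_entry gJ W W'"
| "cdiff _ _ = 0"

text \<open>Elements of the free module C_i are coefficient functions cb => Q vanishing
  outside cbasis i; d_i applied to such an element.\<close>
definition dC :: "nat \<Rightarrow> (nat \<Rightarrow> nat) \<Rightarrow> nat \<Rightarrow> (cb \<Rightarrow> 'k::field qpoly) \<Rightarrow> cb \<Rightarrow> 'k qpoly" where
  "dC n a i x = (\<lambda>b'. if b' \<in> cbasis n a (i - 1)
                      then (\<Sum>b\<in>cbasis n a i. x b * cdiff b b') else 0)"

definition in_C :: "nat \<Rightarrow> (nat \<Rightarrow> nat) \<Rightarrow> nat \<Rightarrow> (cb \<Rightarrow> 'k::field qpoly) \<Rightarrow> bool" where
  "in_C n a i x \<longleftrightarrow> (\<forall>b. b \<notin> cbasis n a i \<longrightarrow> x b = 0)"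

end

theory Submission
  imports Defs
begin

text \<open>The differential of C is monomial: the entry from a basis element b to b' is a sign times
  the monomial of multidegree deg b - deg b', where deg b is the lcm of the generators labelling b
  (times z on the shifted copy of G).  Hence C is the direct sum of its strands, one for each
  multidegree T, and each strand is a finite complex over the field with the same sign matrices.
  Both d o d = 0 and exactness are therefore statements about sign matrices.  The first follows
  from the sign identity of the Taylor complex; Phi is compatible with it because, when W_z has a
  repeated entry, the only two faces of W without repetition have the same image and opposite
  signs.  For exactness, a strand whose multidegree contains z is contracted by coning with f_i0,
  where x_i0 is the first x_i dividing T; a strand without z consists of basis elements of G only
  and is contracted by coning with the first g_w dividing T.  Minimality holds because every
  nonzero entry strictly lowers the multidegree.\<close>

section \<open>Signs of the Taylor complex\<close>

definition taylor_sign :: "'g::linorder set \<Rightarrow> 'g \<Rightarrow> 'k::comm_ring_1" where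
  "taylor_sign U u = (-1) ^ card {v\<in>U. v < u}"

definition taylor_coeff :: "'g::linorder set \<Rightarrow> 'g set \<Rightarrow> 'k::comm_ring_1" where
  "taylor_coeff U U' = (\<Sum>u\<in>U. if U' = U - {u} then taylor_sign U u else 0)"

lemma taylor_coeff_eq_sum:
  "taylor_coeff U U' = (\<Sum>u\<in>U. taylor_sign U u * (if U' = U - {u} then 1 else 0))"
  unfolding taylor_coeff_def by (intro sum.cong refl) auto

lemma taylor_coeff_nonzeroD:
  assumes "taylor_coeff U U' \<noteq> (0::'k::comm_ring_1)"
  shows "\<exists>u\<in>U. U' = U - {u}"
proof (rule ccontr)
  assume "\<not> (\<exists>u\<in>U. U' = U - {u})"
  hence "taylor_coeff U U' = (0::'k)" unfolding taylor_coeff_def by (intro sum.neutral) auto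
  thus False using assms by simp
qed

lemma sum_taylor_coeff_mult:
  assumes "finite U" "finite A" "\<And>u. u \<in> U \<Longrightarrow> U - {u} \<in> A"
  shows "(\<Sum>U'\<in>A. taylor_coeff U U' * f U') = (\<Sum>u\<in>U. taylor_sign U u * f (U - {u}))"
proof -
  have "(\<Sum>U'\<in>A. taylor_coeff U U' * f U')
      = (\<Sum>U'\<in>A. \<Sum>u\<in>U. if U' = U - {u} then taylor_sign U u * f U' else 0)"
    unfolding taylor_coeff_def sum_distrib_right by (intro sum.cong refl) simp
  also have "\<dots> = (\<Sum>u\<in>U. \<Sum>U'\<in>A. if U' = U - {u} then taylor_sign U u * f U' else 0)"
    by (rule sum.swap)
  also have "\<dots> = (\<Sum>u\<in>U. taylor_sign U u * f (U - {u}))"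
    using assms by (intro sum.cong refl) (simp add: sum.delta')
  finally show ?thesis .
qed

lemma taylor_sign_Diff_less:
  assumes "finite U" "u \<in> U" "u < v"
  shows "taylor_sign (U - {u}) v = - taylor_sign U v"
proof -
  have "{w\<in>U. w < v} = insert u {w\<in>U - {u}. w < v}" using assms by auto
  thus ?thesis using assms(1) by (simp add: taylor_sign_def)
qed

lemma taylor_sign_Diff_greater:
  assumes "v < u"
  shows "taylor_sign (U - {u}) v = taylor_sign U v"
proof -
  have "{w\<in>U. w < v} = {w\<in>U - {u}. w < v}" using assms by auto
  thus ?thesis by (simp add: taylor_sign_def)
qed

lemma taylor_sign_least:
  assumes "\<And>u. u \<in> U \<Longrightarrow> u0 \<le> u"
  shows "taylor_sign U u0 = 1"
proof -
  have "{v\<in>U. v < u0} = {}" using assms leD by blast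
  thus ?thesis unfolding taylor_sign_def by (metis card.empty power_0)
qed

lemma taylor_coeff_singleton: "taylor_coeff {u} U' = (if U' = {} then 1 else (0::'k::comm_ring_1))"
proof -
  have "taylor_sign {u} u = (1::'k)" by (rule taylor_sign_least) auto
  thus ?thesis by (simp add: taylor_coeff_def)
qed

text \<open>Pairs of faces are cancelled by the involution swapping the order in which two
  vertices are removed.\<close>
lemma taylor_boundary_boundary:
  assumes "finite U"
  shows "(\<Sum>u\<in>U. taylor_sign U u * taylor_coeff (U - {u}) U2) = (0::'k::comm_ring_1)"
proof -
  define F where "F = (\<lambda>(u, v). if U2 = U - {u} - {v} then taylor_sign U u * taylor_sign (U - {u}) v else (0::'k))"
  let ?L = "{p\<in>U \<times> U. fst p < snd p}" and ?G = "{p\<in>U \<times> U. snd p < fst p}"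
  have "(\<Sum>u\<in>U. taylor_sign U u * taylor_coeff (U - {u}) U2) = (\<Sum>u\<in>U. \<Sum>v\<in>U - {u}. F (u, v))"
    unfolding taylor_coeff_def F_def sum_distrib_left by (intro sum.cong refl) simp
  also have "\<dots> = (\<Sum>p\<in>Sigma U (\<lambda>u. U - {u}). F p)"
    using assms by (simp add: sum.Sigma)
  also have "Sigma U (\<lambda>u. U - {u}) = ?L \<union> ?G" by auto
  also have "(\<Sum>p\<in>?L \<union> ?G. F p) = (\<Sum>p\<in>?L. F p) + (\<Sum>p\<in>?G. F p)"
    using assms by (intro sum.union_disjoint) auto
  also have "(\<Sum>p\<in>?G. F p) = (\<Sum>p\<in>?L. F (snd p, fst p))"
    by (rule sum.reindex_bij_witness[of _ prod.swap prod.swap]) auto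
  also have "\<dots> = - (\<Sum>p\<in>?L. F p)"
    unfolding sum_negf[symmetric]
  proof (intro sum.cong refl)
    fix p assume "p \<in> ?L"
    then obtain u v where "p = (u, v)" "u \<in> U" "v \<in> U" "u < v" by auto
    moreover have "U - {v} - {u} = U - {u} - {v}" by auto
    ultimately show "F (snd p, fst p) = - F p"
      using assms by (simp add: F_def taylor_sign_Diff_less taylor_sign_Diff_greater mult.commute)
  qed
  finally show ?thesis by simp
qed

lemma taylor_sign_insert_least:
  assumes "finite U" "u \<in> U" "u0 \<notin> U" "\<And>u. u \<in> U \<Longrightarrow> u0 \<le> u"
  shows "taylor_sign (insert u0 U) u = - taylor_sign U u"
proof -
  have "u0 < u" using assms by (metis order_le_neq_trans)
  hence "{v\<in>insert u0 U. v < u} = insert u0 {v\<in>U. v < u}" by auto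
  thus ?thesis using assms by (simp add: taylor_sign_def)
qed

text \<open>Coning off a face with a vertex below all of its vertices is a contracting homotopy
  of the Taylor sign complex.\<close>
lemma taylor_cone_homotopy:
  assumes "finite U" "\<And>u. u \<in> U \<Longrightarrow> u0 \<le> u"
  shows "(if u0 \<notin> U then taylor_coeff (insert u0 U) U2 else 0)
       + (\<Sum>u\<in>U. taylor_sign U u * (if u0 \<notin> U - {u} \<and> U2 = insert u0 (U - {u}) then 1 else 0))
       = (if U2 = U then 1 else (0::'k::comm_ring_1))"
proof (cases "u0 \<in> U")
  case True
  have "taylor_sign U u0 = (1::'k)" by (rule taylor_sign_least) (use assms(2) in auto)
  hence "(\<Sum>u\<in>U. taylor_sign U u * (if u0 \<notin> U - {u} \<and> U2 = insert u0 (U - {u}) then 1 else 0))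
      = (\<Sum>u\<in>U. if u = u0 then (if U2 = U then 1 else (0::'k)) else 0)"
    using True by (intro sum.cong refl) (auto simp: insert_absorb)
  thus ?thesis using True assms(1) by simp
next
  case False
  have "taylor_sign (insert u0 U) u0 = (1::'k)" by (rule taylor_sign_least) (use assms(2) in auto)
  hence "taylor_coeff (insert u0 U) U2
      = (if U2 = U then 1 else 0)
        + (\<Sum>u\<in>U. if U2 = insert u0 U - {u} then taylor_sign (insert u0 U) u else (0::'k))"
    using False assms(1) by (simp add: taylor_coeff_def)
  also have "(\<Sum>u\<in>U. if U2 = insert u0 U - {u} then taylor_sign (insert u0 U) u else 0)
     = - (\<Sum>u\<in>U. taylor_sign U u * (if u0 \<notin> U - {u} \<and> U2 = insert u0 (U - {u}) then 1 else 0))"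
    unfolding sum_negf[symmetric]
  proof (intro sum.cong refl)
    fix u assume u: "u \<in> U"
    hence "insert u0 U - {u} = insert u0 (U - {u})" using False by auto
    thus "(if U2 = insert u0 U - {u} then taylor_sign (insert u0 U) u else 0)
        = - (taylor_sign U u * (if u0 \<notin> U - {u} \<and> U2 = insert u0 (U - {u}) then 1 else 0))"
      using taylor_sign_insert_least[OF assms(1) u False assms(2)] False by auto
  qed
  finally show ?thesis using False by simp
qed

lemma less_pair_iff_fst_less:
  fixes W :: "('a::linorder \<times> 'b::linorder) set"
  assumes "inj_on fst W" "v \<in> W" "w \<in> W"
  shows "v < w \<longleftrightarrow> fst v < fst w"
proof (cases "v = w")
  case False
  hence "fst v \<noteq> fst w" using assms inj_on_def by metis
  thus ?thesis by (auto simp: less_prod_def')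
qed simp

lemma taylor_sign_image_fst:
  fixes W :: "('a::linorder \<times> 'b::linorder) set"
  assumes "inj_on fst W" "w \<in> W"
  shows "taylor_sign (fst ` W) (fst w) = taylor_sign W w"
proof -
  have "{i\<in>fst ` W. i < fst w} = fst ` {v\<in>W. v < w}"
    using less_pair_iff_fst_less[OF assms(1) _ assms(2)] by auto
  moreover have "inj_on fst {v\<in>W. v < w}" using assms(1) by (rule inj_on_subset) auto
  ultimately show ?thesis by (simp add: taylor_sign_def card_image)
qed

lemma inj_on_fst_Diff_twin:
  assumes "inj_on fst (W - {u})" "fst u = fst u'" "u \<in> W" "u' \<in> W"
  shows "inj_on fst (W - {u'})"
  using assms unfolding inj_on_def by (metis Diff_iff singletonD singletonI)

text \<open>Removing either element of a two-element fibre of fst gives the same image with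
  opposite signs; this is why Phi, which vanishes on non-injective faces, is a chain map.\<close>
lemma sum_taylor_sign_noninj:
  fixes W :: "('a::linorder \<times> 'b::linorder) set"
  assumes "finite W" "\<not> inj_on fst W"
  shows "(\<Sum>w\<in>W. taylor_sign W w * (if inj_on fst (W - {w}) \<and> P (fst ` (W - {w})) then 1 else 0))
       = (0::'k::comm_ring_1)"
proof -
  obtain u u' where uu: "u \<in> W" "u' \<in> W" "fst u = fst u'" "u < u'"
    using assms(2) unfolding inj_on_def by (metis linorder_neqE)
  define Q where "Q w \<longleftrightarrow> inj_on fst (W - {w}) \<and> P (fst ` (W - {w}))" for w
  have only_twins: "w = u \<or> w = u'" if "w \<in> W" "Q w" for w
  proof (rule ccontr)
    assume "\<not> (w = u \<or> w = u')"
    hence "u \<in> W - {w}" "u' \<in> W - {w}" using uu by auto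
    thus False using \<open>Q w\<close> uu unfolding Q_def inj_on_def by auto
  qed
  have same_image: "fst ` (W - {w}) = fst ` W" if "w \<in> {u, u'}" for w
  proof
    show "fst ` W \<subseteq> fst ` (W - {w})"
    proof
      fix i assume "i \<in> fst ` W"
      then obtain v where "v \<in> W" "i = fst v" by auto
      thus "i \<in> fst ` (W - {w})"
        using that uu by (cases "v = w") (auto intro: rev_image_eqI)
    qed
  qed auto
  have Q_twins: "Q u \<longleftrightarrow> Q u'"
    unfolding Q_def using same_image inj_on_fst_Diff_twin[of W u u'] inj_on_fst_Diff_twin[of W u' u] uu
    by auto
  have sign_twins: "taylor_sign W u' = - (taylor_sign W u :: 'k)" if "Q u"
  proof -
    have "v < u" if "v \<in> W" "v < u'" "v \<noteq> u" for v
    proof (rule ccontr)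
      assume "\<not> v < u"
      hence "fst v = fst u'" using that uu by (auto simp: less_prod_def')
      thus False using \<open>Q u\<close> that uu unfolding Q_def inj_on_def by auto
    qed
    hence "{v\<in>W. v < u'} = insert u {v\<in>W. v < u}" using uu by auto
    thus ?thesis using assms(1) by (simp add: taylor_sign_def)
  qed
  have "(\<Sum>w\<in>W. taylor_sign W w * (if Q w then 1 else 0))
      = (\<Sum>w\<in>{u, u'}. taylor_sign W w * (if Q w then 1 else (0::'k)))"
    using assms(1) uu only_twins by (intro sum.mono_neutral_right) auto
  also have "\<dots> = 0" using uu Q_twins sign_twins by auto
  finally show ?thesis unfolding Q_def .
qed

lemma sum_taylor_sign_fst:
  fixes W :: "('a::linorder \<times> 'b::linorder) set"
  assumes "finite W"
  shows "(\<Sum>w\<in>W. taylor_sign W w * (if inj_on fst (W - {w}) \<and> P (fst ` (W - {w})) then 1 else 0))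
       = (if inj_on fst W
          then (\<Sum>i\<in>fst ` W. taylor_sign (fst ` W) i * (if P (fst ` W - {i}) then 1 else 0))
          else (0::'k::comm_ring_1))"
proof (cases "inj_on fst W")
  case True
  have "(\<Sum>i\<in>fst ` W. taylor_sign (fst ` W) i * (if P (fst ` W - {i}) then 1 else (0::'k)))
      = (\<Sum>w\<in>W. taylor_sign (fst ` W) (fst w) * (if P (fst ` W - {fst w}) then 1 else 0))"
    using True by (rule sum.reindex_cong) simp_all
  also have "\<dots> = (\<Sum>w\<in>W. taylor_sign W w * (if inj_on fst (W - {w}) \<and> P (fst ` (W - {w})) then 1 else 0))"
  proof (intro sum.cong refl)
    fix w assume "w \<in> W"
    moreover from this have "fst ` (W - {w}) = fst ` W - {fst w}" "inj_on fst (W - {w})"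
      using True by (auto simp: inj_on_def)
    ultimately show "taylor_sign (fst ` W) (fst w) * (if P (fst ` W - {fst w}) then 1 else 0)
        = taylor_sign W w * (if inj_on fst (W - {w}) \<and> P (fst ` (W - {w})) then 1 else 0)"
      using True by (simp add: taylor_sign_image_fst)
  qed
  finally show ?thesis using True by simp
qed (use sum_taylor_sign_noninj[OF assms] in simp)


section \<open>The sign matrix of the resolution\<close>

text \<open>The scalar part of the differential: cdiff b b' is sign_matrix b b' times a monomial
  (cdiff_eq_single below).\<close>
fun sign_matrix :: "cb \<Rightarrow> cb \<Rightarrow> 'k::comm_ring_1" where
  "sign_matrix (CF V) (CF V') = taylor_coeff V V'"
| "sign_matrix (CG W) (CG W') = taylor_coeff W W'"
| "sign_matrix (CG W) (CF V') = (if card W = 1 \<and> V' = {} then taylor_coeff W {} else 0)"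
| "sign_matrix (CH W) (CF V') = (if inj_on fst W \<and> V' = fst ` W then 1 else 0)"
| "sign_matrix (CH W) (CG W') = (if W' = W then -1 else 0)"
| "sign_matrix (CH W) (CH W') = - taylor_coeff W W'"
| "sign_matrix _ _ = 0"

lemma finite_GI [simp]: "finite (GI n)"
  by (simp add: GI_def)

lemma finite_GJ [simp]: "finite (GJ n a)"
  by (simp add: GJ_def)

lemma fst_GJ_subset: "W \<subseteq> GJ n a \<Longrightarrow> fst ` W \<subseteq> GI n"
  by (auto simp: GJ_def GI_def)

lemma CF_mem_cbasis:
  "CF V \<in> cbasis n a j \<longleftrightarrow> (if j = 0 then V = {} else V \<subseteq> GI n \<and> card V = j)"
  by (auto simp: cbasis_def)

lemma CG_mem_cbasis: "CG W \<in> cbasis n a j \<longleftrightarrow> j \<noteq> 0 \<and> W \<subseteq> GJ n a \<and> card W = j"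
  by (auto simp: cbasis_def)

lemma CH_mem_cbasis: "CH W \<in> cbasis n a j \<longleftrightarrow> 2 \<le> j \<and> W \<subseteq> GJ n a \<and> card W = j - 1"
  by (auto simp: cbasis_def)

lemma finite_cbasis [simp]: "finite (cbasis n a i)"
proof -
  have "finite {V. V \<subseteq> GI n \<and> card V = i}" "\<And>k. finite {W. W \<subseteq> GJ n a \<and> card W = k}"
    by (auto intro: finite_subset[of _ "Pow (GI n)"] finite_subset[of _ "Pow (GJ n a)"])
  thus ?thesis unfolding cbasis_def by auto
qed

lemma finite_vimage_cbasis [simp]:
  "finite (CF -` cbasis n a j)" "finite (CG -` cbasis n a j)" "finite (CH -` cbasis n a j)"
  by (auto intro: finite_vimageI simp: inj_def)

lemma sum_cb_split:
  assumes "finite B"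
  shows "(\<Sum>b\<in>B. g b)
       = (\<Sum>V\<in>CF -` B. g (CF V)) + (\<Sum>W\<in>CG -` B. g (CG W)) + (\<Sum>W\<in>CH -` B. g (CH W))"
proof -
  have fin: "finite (CF -` B)" "finite (CG -` B)" "finite (CH -` B)"
    using assms by (auto intro: finite_vimageI simp: inj_def)
  have "B = CF ` (CF -` B) \<union> CG ` (CG -` B) \<union> CH ` (CH -` B)"
    by (auto simp: image_iff) (metis cb.exhaust)
  hence "(\<Sum>b\<in>B. g b) = (\<Sum>b\<in>CF ` (CF -` B) \<union> CG ` (CG -` B) \<union> CH ` (CH -` B). g b)"
    by simp
  also have "\<dots> = (\<Sum>b\<in>CF ` (CF -` B) \<union> CG ` (CG -` B). g b) + (\<Sum>b\<in>CH ` (CH -` B). g b)"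
    using fin by (intro sum.union_disjoint finite_UnI finite_imageI) auto
  also have "(\<Sum>b\<in>CF ` (CF -` B) \<union> CG ` (CG -` B). g b)
      = (\<Sum>b\<in>CF ` (CF -` B). g b) + (\<Sum>b\<in>CG ` (CG -` B). g b)"
    using fin by (intro sum.union_disjoint finite_UnI finite_imageI) auto
  also have "(\<Sum>b\<in>CF ` (CF -` B). g b) = (\<Sum>V\<in>CF -` B. g (CF V))"
    by (subst sum.reindex) (auto simp: inj_on_def)
  also have "(\<Sum>b\<in>CG ` (CG -` B). g b) = (\<Sum>W\<in>CG -` B. g (CG W))"
    by (subst sum.reindex) (auto simp: inj_on_def)
  also have "(\<Sum>b\<in>CH ` (CH -` B). g b) = (\<Sum>W\<in>CH -` B. g (CH W))"
    by (subst sum.reindex) (auto simp: inj_on_def)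
  finally show ?thesis .
qed

lemma sign_matrix_row_CF:
  assumes "1 \<le> j" "CF V \<in> cbasis n a j"
  shows "(\<Sum>b\<in>cbasis n a (j - 1). sign_matrix (CF V) b * f b)
       = (\<Sum>u\<in>V. taylor_sign V u * f (CF (V - {u})))"
proof -
  have V: "V \<subseteq> GI n" "card V = j" "finite V"
    using assms by (auto simp: CF_mem_cbasis intro: card_ge_0_finite)
  have "V - {u} \<in> CF -` cbasis n a (j - 1)" if "u \<in> V" for u
  proof (cases "j = 1")
    case True
    hence "V = {u}" using V that by (metis card_1_singletonE singletonD)
    thus ?thesis using True by (simp add: CF_mem_cbasis)
  qed (use V that assms in \<open>auto simp: CF_mem_cbasis\<close>)
  thus ?thesis using V by (simp add: sum_cb_split sum_taylor_coeff_mult)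
qed

lemma sign_matrix_row_CG:
  assumes "1 \<le> j" "CG W \<in> cbasis n a j"
  shows "(\<Sum>b\<in>cbasis n a (j - 1). sign_matrix (CG W) b * f b)
     = (if card W = 1 then f (CF {}) else (\<Sum>w\<in>W. taylor_sign W w * f (CG (W - {w}))))"
proof -
  have W: "W \<subseteq> GJ n a" "card W = j" "finite W"
    using assms by (auto simp: CG_mem_cbasis intro: card_ge_0_finite)
  show ?thesis
  proof (cases "j = 1")
    case True
    then obtain w where "W = {w}" using W by (metis card_1_singletonE)
    moreover have "cbasis n a (j - 1) = {CF {}}" using True by (simp add: cbasis_def)
    ultimately show ?thesis by (simp add: taylor_coeff_singleton)
  next
    case False
    have "W - {w} \<in> CG -` cbasis n a (j - 1)" if "w \<in> W" for w
      using W that False assms(1) by (auto simp: CG_mem_cbasis)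
    thus ?thesis using W False by (simp add: sum_cb_split sum_taylor_coeff_mult)
  qed
qed

lemma sign_matrix_row_CH:
  assumes "2 \<le> j" "CH W \<in> cbasis n a j"
  shows "(\<Sum>b\<in>cbasis n a (j - 1). sign_matrix (CH W) b * f b)
     = (if inj_on fst W then f (CF (fst ` W)) else 0) - f (CG W)
       - (if 2 \<le> card W then (\<Sum>w\<in>W. taylor_sign W w * f (CH (W - {w}))) else 0)"
proof -
  have W: "W \<subseteq> GJ n a" "card W = j - 1" "finite W"
    using assms by (auto simp: CH_mem_cbasis intro: card_ge_0_finite)
  have F: "(\<Sum>V'\<in>CF -` cbasis n a (j - 1). sign_matrix (CH W) (CF V') * f (CF V'))
      = (if inj_on fst W then f (CF (fst ` W)) else 0)"
  proof (cases "inj_on fst W")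
    case True
    hence "fst ` W \<in> CF -` cbasis n a (j - 1)"
      using W assms fst_GJ_subset by (auto simp: CF_mem_cbasis card_image)
    moreover have "(\<Sum>V'\<in>CF -` cbasis n a (j - 1). sign_matrix (CH W) (CF V') * f (CF V'))
        = (\<Sum>V'\<in>CF -` cbasis n a (j - 1). if fst ` W = V' then f (CF V') else 0)"
      using True by (intro sum.cong refl) auto
    ultimately show ?thesis using True by (simp add: sum.delta')
  qed simp
  have "(\<Sum>W'\<in>CG -` cbasis n a (j - 1). sign_matrix (CH W) (CG W') * f (CG W'))
      = (\<Sum>W'\<in>CG -` cbasis n a (j - 1). if W = W' then - f (CG W') else 0)"
    by (intro sum.cong refl) auto
  also have "\<dots> = - f (CG W)" using W assms by (subst sum.delta') (auto simp: CG_mem_cbasis)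
  finally have G: "(\<Sum>W'\<in>CG -` cbasis n a (j - 1). sign_matrix (CH W) (CG W') * f (CG W'))
      = - f (CG W)" .
  have H: "(\<Sum>W'\<in>CH -` cbasis n a (j - 1). sign_matrix (CH W) (CH W') * f (CH W'))
      = - (if 2 \<le> card W then (\<Sum>w\<in>W. taylor_sign W w * f (CH (W - {w}))) else 0)"
  proof (cases "2 \<le> card W")
    case True
    have "W - {w} \<in> CH -` cbasis n a (j - 1)" if "w \<in> W" for w
      using W that True by (auto simp: CH_mem_cbasis)
    thus ?thesis using W True by (simp add: sum_negf sum_taylor_coeff_mult)
  next
    case False
    hence "CH -` cbasis n a (j - 1) = {}" using W by (auto simp: CH_mem_cbasis)
    thus ?thesis using False by simp
  qed
  show ?thesis unfolding sum_cb_split[OF finite_cbasis] F G H by simp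
qed

lemma sum_taylor_sign_neg_indicator:
  "(\<Sum>w\<in>W. taylor_sign W w * (if P w then - 1 else 0))
   = - (\<Sum>w\<in>W. taylor_sign W w * (if P w then 1 else (0::'k::comm_ring_1)))"
  unfolding sum_negf[symmetric] by (intro sum.cong refl) simp


text \<open>In sign form, this says that Phi commutes with the Taylor differentials.\<close>
lemma sum_taylor_sign_Phi:
  fixes W :: "(nat \<times> nat) set"
  assumes "finite W"
  shows "(\<Sum>w\<in>W. taylor_sign W w * sign_matrix (CH (W - {w})) (CF V))
       = (if inj_on fst W then taylor_coeff (fst ` W) V else (0::'k::comm_ring_1))"
proof -
  have "(\<Sum>w\<in>W. taylor_sign W w * sign_matrix (CH (W - {w})) (CF V))
      = (\<Sum>w\<in>W. taylor_sign W w * (if inj_on fst (W - {w}) \<and> V = fst ` (W - {w}) then 1 else (0::'k)))"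
    by (intro sum.cong refl) auto
  thus ?thesis
    using sum_taylor_sign_fst[OF assms, of "\<lambda>X. V = X", where 'k='k] by (simp add: taylor_coeff_eq_sum)
qed

lemma sign_matrix_sq_zero_CH:
  assumes "1 \<le> i" "CH W \<in> cbasis n a (Suc i)" "b2 \<in> cbasis n a (i - 1)"
  shows "(\<Sum>b1\<in>cbasis n a i. sign_matrix (CH W) b1 * sign_matrix b1 b2) = (0::'k::comm_ring_1)"
proof -
  have W: "finite W" "card W = i"
    using assms by (auto simp: CH_mem_cbasis intro: card_ge_0_finite)
  have row: "(\<Sum>b1\<in>cbasis n a i. sign_matrix (CH W) b1 * sign_matrix b1 b2 :: 'k)
     = (if inj_on fst W then sign_matrix (CF (fst ` W)) b2 else 0) - sign_matrix (CG W) b2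
       - (if 2 \<le> card W then (\<Sum>w\<in>W. taylor_sign W w * sign_matrix (CH (W - {w})) b2) else 0)"
    using sign_matrix_row_CH[of "Suc i" W n a "\<lambda>b1. sign_matrix b1 b2 :: 'k"] assms W by simp
  show ?thesis
  proof (cases b2)
    case (CF V2)
    show ?thesis
    proof (cases "card W = 1")
      case True
      then obtain w where "W = {w}" by (metis card_1_singletonE)
      thus ?thesis unfolding row using CF by (simp add: taylor_coeff_singleton)
    next
      case False
      hence "2 \<le> card W" using W assms(1) by auto
      thus ?thesis unfolding row using CF False sum_taylor_sign_Phi[OF W(1), of V2, where 'k='k]
        by simp
    qed
  next
    case (CG W2)
    hence "2 \<le> card W" using assms W by (auto simp: CG_mem_cbasis)
    moreover have "(\<Sum>w\<in>W. taylor_sign W w * sign_matrix (CH (W - {w})) b2)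
        = - (taylor_coeff W W2 :: 'k)"
      using CG by (simp add: sum_taylor_sign_neg_indicator taylor_coeff_eq_sum)
    ultimately show ?thesis unfolding row using CG by simp
  next
    case (CH W2)
    hence "2 \<le> card W" using assms W by (auto simp: CH_mem_cbasis)
    moreover have "(\<Sum>w\<in>W. taylor_sign W w * sign_matrix (CH (W - {w})) b2)
        = - (\<Sum>w\<in>W. taylor_sign W w * taylor_coeff (W - {w}) W2 :: 'k)"
      using CH by (simp add: sum_negf[symmetric])
    ultimately show ?thesis unfolding row using CH taylor_boundary_boundary[OF W(1)] by simp
  qed
qed

lemma sign_matrix_sq_zero:
  assumes "1 \<le> i" "b0 \<in> cbasis n a (Suc i)" "b2 \<in> cbasis n a (i - 1)"
  shows "(\<Sum>b1\<in>cbasis n a i. sign_matrix b0 b1 * sign_matrix b1 b2) = (0::'k::comm_ring_1)"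
proof (cases b0)
  case (CF V)
  have "finite V" using assms CF by (auto simp: CF_mem_cbasis intro: card_ge_0_finite)
  thus ?thesis
    using sign_matrix_row_CF[of "Suc i" V n a "\<lambda>b1. sign_matrix b1 b2 :: 'k"] assms CF
    by (cases b2) (simp_all add: taylor_boundary_boundary)
next
  case (CG W)
  have W: "finite W" "card W = Suc i" "2 \<le> card W"
    using assms CG by (auto simp: CG_mem_cbasis intro: card_ge_0_finite)
  have "(\<Sum>w\<in>W. taylor_sign W w * sign_matrix (CG (W - {w})) b2) = (0::'k)"
  proof (cases b2)
    case (CF V2)
    have "sign_matrix (CG (W - {w})) b2
        = (if card W = 2 \<and> V2 = {} then taylor_coeff (W - {w}) {} else (0::'k))"
      if "w \<in> W" for w
      using that W CF by auto
    thus ?thesis using taylor_boundary_boundary[OF W(1), of "{}", where 'k='k]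
      by (cases "card W = 2 \<and> V2 = {}") (simp_all cong: sum.cong)
  qed (simp_all add: taylor_boundary_boundary[OF W(1)])
  thus ?thesis using sign_matrix_row_CG[of "Suc i" W n a "\<lambda>b1. sign_matrix b1 b2 :: 'k"] assms CG W by simp
next
  case (CH W)
  show ?thesis unfolding CH by (rule sign_matrix_sq_zero_CH[OF assms(1) assms(2)[unfolded CH] assms(3)])
qed


section \<open>Contracting homotopies\<close>

text \<open>Contracting homotopies of the sign complex restricted to the basis elements dividing
  a fixed multidegree: homotopy_z cones with f_{i0} (the multidegree contains z and x_{i0}),
  homotopy_y cones with g_{w0} (the multidegree contains x_i y_ij for w0 = (i, j), but not z).\<close>
fun homotopy_z :: "nat \<Rightarrow> cb \<Rightarrow> cb \<Rightarrow> 'k::comm_ring_1" where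
  "homotopy_z i0 (CF V) (CF V') = (if i0 \<notin> V \<and> V' = insert i0 V then 1 else 0)"
| "homotopy_z i0 (CG W) (CF V') =
     (if inj_on fst W \<and> i0 \<notin> fst ` W \<and> V' = insert i0 (fst ` W) then 1 else 0)"
| "homotopy_z i0 (CG W) (CH W') = (if W' = W then -1 else 0)"
| "homotopy_z _ _ _ = 0"

fun homotopy_y :: "nat \<times> nat \<Rightarrow> cb \<Rightarrow> cb \<Rightarrow> 'k::comm_ring_1" where
  "homotopy_y w0 (CF V) (CG W') = (if V = {} \<and> W' = {w0} then 1 else 0)"
| "homotopy_y w0 (CG W) (CG W') = (if w0 \<notin> W \<and> W' = insert w0 W then 1 else 0)"
| "homotopy_y _ _ _ = 0"

lemma homotopy_z_row_CF:
  assumes "1 \<le> i" "CF V \<in> cbasis n a i" "i0 \<in> GI n"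
  shows "(\<Sum>b1\<in>cbasis n a (Suc i). homotopy_z i0 (CF V) b1 * g b1)
       = (if i0 \<notin> V then g (CF (insert i0 V)) else 0)"
proof -
  have V: "V \<subseteq> GI n" "card V = i" "finite V"
    using assms by (auto simp: CF_mem_cbasis intro: card_ge_0_finite)
  have "(\<Sum>V'\<in>CF -` cbasis n a (Suc i). homotopy_z i0 (CF V) (CF V') * g (CF V'))
     = (\<Sum>V'\<in>CF -` cbasis n a (Suc i). if insert i0 V = V' then (if i0 \<notin> V then g (CF V') else 0) else 0)"
    by (intro sum.cong refl) auto
  also have "\<dots> = (if i0 \<notin> V then g (CF (insert i0 V)) else 0)"
    using V assms by (subst sum.delta') (auto simp: CF_mem_cbasis)
  finally show ?thesis by (simp add: sum_cb_split)
qed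

lemma homotopy_z_row_CG:
  assumes "1 \<le> i" "CG W \<in> cbasis n a i" "i0 \<in> GI n"
  shows "(\<Sum>b1\<in>cbasis n a (Suc i). homotopy_z i0 (CG W) b1 * g b1)
     = (if inj_on fst W \<and> i0 \<notin> fst ` W then g (CF (insert i0 (fst ` W))) else 0) - g (CH W)"
proof -
  have W: "W \<subseteq> GJ n a" "card W = i" "finite W"
    using assms by (auto simp: CG_mem_cbasis intro: card_ge_0_finite)
  have F: "(\<Sum>V'\<in>CF -` cbasis n a (Suc i). homotopy_z i0 (CG W) (CF V') * g (CF V'))
     = (if inj_on fst W \<and> i0 \<notin> fst ` W then g (CF (insert i0 (fst ` W))) else 0)"
  proof (cases "inj_on fst W \<and> i0 \<notin> fst ` W")
    case True
    hence "insert i0 (fst ` W) \<in> CF -` cbasis n a (Suc i)"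
      using W assms fst_GJ_subset by (auto simp: CF_mem_cbasis card_image)
    moreover have "(\<Sum>V'\<in>CF -` cbasis n a (Suc i). homotopy_z i0 (CG W) (CF V') * g (CF V'))
        = (\<Sum>V'\<in>CF -` cbasis n a (Suc i). if insert i0 (fst ` W) = V' then g (CF V') else 0)"
      using True by (intro sum.cong refl) auto
    ultimately show ?thesis using True by (simp add: sum.delta')
  next
    case False
    thus ?thesis by (intro trans[OF sum.neutral]) auto
  qed
  have "(\<Sum>W'\<in>CH -` cbasis n a (Suc i). homotopy_z i0 (CG W) (CH W') * g (CH W'))
      = (\<Sum>W'\<in>CH -` cbasis n a (Suc i). if W = W' then - g (CH W') else 0)"
    by (intro sum.cong refl) auto
  also have "\<dots> = - g (CH W)" using W assms by (subst sum.delta') (auto simp: CH_mem_cbasis)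
  finally show ?thesis unfolding sum_cb_split[OF finite_cbasis] F by simp
qed

lemma homotopy_y_row_CG:
  assumes "1 \<le> i" "CG W \<in> cbasis n a i" "w0 \<in> GJ n a"
  shows "(\<Sum>b1\<in>cbasis n a (Suc i). homotopy_y w0 (CG W) b1 * g b1)
       = (if w0 \<notin> W then g (CG (insert w0 W)) else 0)"
proof -
  have W: "W \<subseteq> GJ n a" "card W = i" "finite W"
    using assms by (auto simp: CG_mem_cbasis intro: card_ge_0_finite)
  have "(\<Sum>W'\<in>CG -` cbasis n a (Suc i). homotopy_y w0 (CG W) (CG W') * g (CG W'))
     = (\<Sum>W'\<in>CG -` cbasis n a (Suc i). if insert w0 W = W' then (if w0 \<notin> W then g (CG W') else 0) else 0)"
    by (intro sum.cong refl) auto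
  also have "\<dots> = (if w0 \<notin> W then g (CG (insert w0 W)) else 0)"
    using W assms by (subst sum.delta') (auto simp: CG_mem_cbasis)
  finally show ?thesis by (simp add: sum_cb_split)
qed


lemma homotopy_z_CF:
  assumes "1 \<le> i" "CF V \<in> cbasis n a i" "i0 \<in> GI n" "\<And>v. v \<in> V \<Longrightarrow> i0 \<le> v"
  shows "(\<Sum>b1\<in>cbasis n a (Suc i). homotopy_z i0 (CF V) b1 * sign_matrix b1 b2)
       + (\<Sum>b1\<in>cbasis n a (i - 1). sign_matrix (CF V) b1 * homotopy_z i0 b1 b2)
       = (if CF V = b2 then 1 else (0::'k::comm_ring_1))"
proof -
  have "finite V" using assms by (auto simp: CF_mem_cbasis intro: card_ge_0_finite)
  have row: "(\<Sum>b1\<in>cbasis n a (Suc i). homotopy_z i0 (CF V) b1 * sign_matrix b1 b2)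
      = (if i0 \<notin> V then sign_matrix (CF (insert i0 V)) b2 else (0::'k))"
    using homotopy_z_row_CF[OF assms(1-3)] .
  have col: "(\<Sum>b1\<in>cbasis n a (i - 1). sign_matrix (CF V) b1 * homotopy_z i0 b1 b2)
      = (\<Sum>u\<in>V. taylor_sign V u * (homotopy_z i0 (CF (V - {u})) b2 :: 'k))"
    using sign_matrix_row_CF[OF assms(1,2)] .
  show ?thesis
  proof (cases b2)
    case (CF V2)
    thus ?thesis unfolding row col using taylor_cone_homotopy[OF \<open>finite V\<close> assms(4), of V2, where 'k='k]
      by (auto simp: eq_commute)
  qed (unfold row col, simp_all)
qed

lemma homotopy_z_column_CG_CF:
  assumes "1 \<le> i" "CG W \<in> cbasis n a i"
  shows "(\<Sum>b1\<in>cbasis n a (i - 1). sign_matrix (CG W) b1 * homotopy_z i0 b1 (CF V2))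
       = (if inj_on fst W
          then (\<Sum>u\<in>fst ` W. taylor_sign (fst ` W) u *
                 (if i0 \<notin> fst ` W - {u} \<and> V2 = insert i0 (fst ` W - {u}) then 1 else 0))
          else (0::'k::comm_ring_1))"
proof -
  define P where "P X \<longleftrightarrow> i0 \<notin> X \<and> V2 = insert i0 X" for X
  have W: "card W = i" "finite W"
    using assms by (auto simp: CG_mem_cbasis intro: card_ge_0_finite)
  have col: "(\<Sum>b1\<in>cbasis n a (i - 1). sign_matrix (CG W) b1 * homotopy_z i0 b1 (CF V2))
     = (if card W = 1 then homotopy_z i0 (CF {}) (CF V2)
        else (\<Sum>w\<in>W. taylor_sign W w * (homotopy_z i0 (CG (W - {w})) (CF V2) :: 'k)))"
    using sign_matrix_row_CG[OF assms] .
  show ?thesis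
  proof (cases "card W = 1")
    case True
    then obtain w where "W = {w}" by (metis card_1_singletonE)
    moreover have "taylor_sign {fst w} (fst w) = (1::'k)" by (rule taylor_sign_least) auto
    ultimately show ?thesis unfolding col by simp
  next
    case False
    have "(\<Sum>w\<in>W. taylor_sign W w * (homotopy_z i0 (CG (W - {w})) (CF V2) :: 'k))
      = (\<Sum>w\<in>W. taylor_sign W w * (if inj_on fst (W - {w}) \<and> P (fst ` (W - {w})) then 1 else 0))"
      by (intro sum.cong refl) (auto simp: P_def)
    thus ?thesis unfolding col using False sum_taylor_sign_fst[OF W(2), of P, where 'k='k]
      by (simp add: P_def)
  qed
qed

lemma homotopy_z_CG:
  assumes "1 \<le> i" "CG W \<in> cbasis n a i" "i0 \<in> GI n" "\<And>p. p \<in> W \<Longrightarrow> i0 \<le> fst p"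
    and "b2 \<in> cbasis n a i"
  shows "(\<Sum>b1\<in>cbasis n a (Suc i). homotopy_z i0 (CG W) b1 * sign_matrix b1 b2)
       + (\<Sum>b1\<in>cbasis n a (i - 1). sign_matrix (CG W) b1 * homotopy_z i0 b1 b2)
       = (if CG W = b2 then 1 else (0::'k::comm_ring_1))"
proof -
  have W: "W \<subseteq> GJ n a" "card W = i" "finite W"
    using assms by (auto simp: CG_mem_cbasis intro: card_ge_0_finite)
  have row: "(\<Sum>b1\<in>cbasis n a (Suc i). homotopy_z i0 (CG W) b1 * sign_matrix b1 b2)
      = (if inj_on fst W \<and> i0 \<notin> fst ` W then sign_matrix (CF (insert i0 (fst ` W))) b2 else 0)
        - (sign_matrix (CH W) b2 :: 'k)"
    using homotopy_z_row_CG[OF assms(1-3)] .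
  have col: "(\<Sum>b1\<in>cbasis n a (i - 1). sign_matrix (CG W) b1 * homotopy_z i0 b1 b2)
     = (if card W = 1 then homotopy_z i0 (CF {}) b2
        else (\<Sum>w\<in>W. taylor_sign W w * (homotopy_z i0 (CG (W - {w})) b2 :: 'k)))"
    using sign_matrix_row_CG[OF assms(1,2)] .
  show ?thesis
  proof (cases b2)
    case (CF V2)
    let ?A = "if i0 \<notin> fst ` W then taylor_coeff (insert i0 (fst ` W)) V2 else (0::'k)"
    let ?S = "\<Sum>u\<in>fst ` W. taylor_sign (fst ` W) u *
               (if i0 \<notin> fst ` W - {u} \<and> V2 = insert i0 (fst ` W - {u}) then 1 else (0::'k))"
    let ?C = "if V2 = fst ` W then 1 else (0::'k)"
    note col_CF = homotopy_z_column_CG_CF[OF assms(1,2), of i0 V2, where 'k='k, folded CF]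
    show ?thesis
    proof (cases "inj_on fst W")
      case True
      have cone: "?A + ?S = ?C"
        by (rule taylor_cone_homotopy) (use W(3) assms(4) in auto)
      have "(\<Sum>b1\<in>cbasis n a (Suc i). homotopy_z i0 (CG W) b1 * sign_matrix b1 b2) = ?A - ?C"
        unfolding row using True CF by simp
      hence "(\<Sum>b1\<in>cbasis n a (Suc i). homotopy_z i0 (CG W) b1 * sign_matrix b1 b2)
          + (\<Sum>b1\<in>cbasis n a (i - 1). sign_matrix (CG W) b1 * homotopy_z i0 b1 b2) = (?A + ?S) - ?C"
        using col_CF True by simp
      thus ?thesis unfolding cone using CF by simp
    qed (unfold row col_CF, use CF in simp)
  next
    case (CH W2)
    hence "card W \<noteq> 1" using assms W by (auto simp: CH_mem_cbasis)
    moreover have "(\<Sum>w\<in>W. taylor_sign W w * (homotopy_z i0 (CG (W - {w})) b2 :: 'k))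
        = - taylor_coeff W W2"
      using CH by (simp add: sum_taylor_sign_neg_indicator taylor_coeff_eq_sum eq_commute)
    ultimately show ?thesis unfolding row col using CH by simp
  qed (unfold row col, auto)
qed

lemma homotopy_z_CH:
  assumes "CH W \<in> cbasis n a i"
  shows "(\<Sum>b1\<in>cbasis n a (Suc i). homotopy_z i0 (CH W) b1 * sign_matrix b1 b2)
       + (\<Sum>b1\<in>cbasis n a (i - 1). sign_matrix (CH W) b1 * homotopy_z i0 b1 b2)
       = (if CH W = b2 then 1 else (0::'k::comm_ring_1))"
proof -
  have "2 \<le> i" using assms by (simp add: CH_mem_cbasis)
  thus ?thesis using sign_matrix_row_CH[OF _ assms, of "\<lambda>b1. homotopy_z i0 b1 b2 :: 'k"]
    by (cases b2) auto
qed

lemma homotopy_y_CG: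
  assumes "1 \<le> i" "CG W \<in> cbasis n a i" "w0 \<in> GJ n a" "\<And>w. w \<in> W \<Longrightarrow> w0 \<le> w"
    and "b2 \<in> cbasis n a i"
  shows "(\<Sum>b1\<in>cbasis n a (Suc i). homotopy_y w0 (CG W) b1 * sign_matrix b1 b2)
       + (\<Sum>b1\<in>cbasis n a (i - 1). sign_matrix (CG W) b1 * homotopy_y w0 b1 b2)
       = (if CG W = b2 then 1 else (0::'k::comm_ring_1))"
proof -
  have W: "card W = i" "finite W"
    using assms by (auto simp: CG_mem_cbasis intro: card_ge_0_finite)
  have row: "(\<Sum>b1\<in>cbasis n a (Suc i). homotopy_y w0 (CG W) b1 * sign_matrix b1 b2)
      = (if w0 \<notin> W then sign_matrix (CG (insert w0 W)) b2 else (0::'k))"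
    using homotopy_y_row_CG[OF assms(1-3)] .
  have col: "(\<Sum>b1\<in>cbasis n a (i - 1). sign_matrix (CG W) b1 * homotopy_y w0 b1 b2)
     = (if card W = 1 then homotopy_y w0 (CF {}) b2
        else (\<Sum>w\<in>W. taylor_sign W w * (homotopy_y w0 (CG (W - {w})) b2 :: 'k)))"
    using sign_matrix_row_CG[OF assms(1,2)] .
  show ?thesis
  proof (cases b2)
    case (CG W2)
    have "(\<Sum>b1\<in>cbasis n a (i - 1). sign_matrix (CG W) b1 * homotopy_y w0 b1 b2)
       = (\<Sum>u\<in>W. taylor_sign W u * (if w0 \<notin> W - {u} \<and> W2 = insert w0 (W - {u}) then 1 else (0::'k)))"
    proof (cases "card W = 1")
      case True
      then obtain w where "W = {w}" by (metis card_1_singletonE)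
      moreover have "taylor_sign {w} w = (1::'k)" by (rule taylor_sign_least) auto
      ultimately show ?thesis unfolding col using CG by auto
    next
      case False
      thus ?thesis unfolding col using CG by simp
    qed
    thus ?thesis unfolding row using CG taylor_cone_homotopy[OF W(2) assms(4), of W2, where 'k='k]
      by (auto simp: eq_commute)
  next
    case (CF V2)
    hence "V2 \<noteq> {}" using assms by (auto simp: CF_mem_cbasis)
    thus ?thesis unfolding row col using CF by auto
  qed (unfold row col, simp_all)
qed


section \<open>Monomials and multidegrees\<close>

lemma Var_power: "(Var v :: 'k::field qpoly) ^ k = Poly_Mapping.single (Poly_Mapping.single v k) 1"
  by (induction k) (simp_all add: Var_def mult_single single_add[symmetric] add.commute)

lemma prod_single_one:
  fixes f :: "'b \<Rightarrow> 'v \<Rightarrow>\<^sub>0 nat"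
  shows "finite A \<Longrightarrow> (\<Prod>v\<in>A. Poly_Mapping.single (f v) (1::'k::comm_ring_1))
       = Poly_Mapping.single (\<Sum>v\<in>A. f v) 1"
  by (induction A rule: finite_induct) (simp_all add: mult_single add.commute)

lemma sum_single: "(\<Sum>u\<in>A. Poly_Mapping.single k (f u)) = Poly_Mapping.single k (\<Sum>u\<in>A. f u)"
  by (induction A rule: infinite_finite_induct) (simp_all add: single_add)

lemma mono_eq_single:
  assumes "finite {v. e v \<noteq> 0}"
  shows "(mono e :: 'k::field qpoly) = Poly_Mapping.single (Abs_poly_mapping e) 1"
proof -
  have "(\<Sum>v\<in>{v. e v \<noteq> 0}. Poly_Mapping.single v (e v)) = Abs_poly_mapping e"
  proof (rule poly_mapping_eqI)
    fix k
    have "Poly_Mapping.lookup (\<Sum>v\<in>{v. e v \<noteq> 0}. Poly_Mapping.single v (e v)) k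
        = (\<Sum>v\<in>{v. e v \<noteq> 0}. if v = k then e v else 0)"
      unfolding lookup_sum by (intro sum.cong refl) (simp add: lookup_single when_def)
    thus "Poly_Mapping.lookup (\<Sum>v\<in>{v. e v \<noteq> 0}. Poly_Mapping.single v (e v)) k
        = Poly_Mapping.lookup (Abs_poly_mapping e) k"
      using assms by (simp add: sum.delta)
  qed
  thus ?thesis using assms by (simp add: mono_def Var_power prod_single_one)
qed

lemma mono_inj:
  assumes "finite {v. e v \<noteq> 0}" "finite {v. e' v \<noteq> 0}" "(mono e :: 'k::field qpoly) = mono e'"
  shows "e = e'"
proof -
  have "Abs_poly_mapping e = Abs_poly_mapping e'"
    using assms mono_eq_single[of e, where 'k='k] mono_eq_single[of e', where 'k='k]
    by (metis lookup_single_eq lookup_single_not_eq one_neq_zero)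
  thus ?thesis using assms(1,2) by (metis lookup_Abs_poly_mapping)
qed

lemma lookup_mult_single:
  fixes p :: "('v \<Rightarrow>\<^sub>0 nat) \<Rightarrow>\<^sub>0 'k::comm_ring_1"
  shows "Poly_Mapping.lookup (p * Poly_Mapping.single m c) t
       = (if Poly_Mapping.lookup m \<le> Poly_Mapping.lookup t then Poly_Mapping.lookup p (t - m) * c else 0)"
proof -
  have "(\<Sum>q. Poly_Mapping.lookup (Poly_Mapping.single m c) q when t = l + q) = (c when t = l + m)" for l
  proof -
    have "(\<Sum>q. Poly_Mapping.lookup (Poly_Mapping.single m c) q when t = l + q)
        = (\<Sum>q. (c when t = l + q) when q = m)"
      by (intro Sum_any.cong) (auto simp: lookup_single when_def)
    thus ?thesis by simp
  qed
  hence "Poly_Mapping.lookup (p * Poly_Mapping.single m c) t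
      = (\<Sum>l. Poly_Mapping.lookup p l * (c when t = l + m))"
    by (simp add: lookup_mult)
  also have "\<dots> = (if Poly_Mapping.lookup m \<le> Poly_Mapping.lookup t
                   then Poly_Mapping.lookup p (t - m) * c else 0)"
  proof (cases "Poly_Mapping.lookup m \<le> Poly_Mapping.lookup t")
    case True
    have "t = l + m \<longleftrightarrow> l = t - m" for l
      using True by (auto simp: le_fun_def poly_mapping_eq_iff lookup_add lookup_minus fun_eq_iff)
    hence "(\<Sum>l. Poly_Mapping.lookup p l * (c when t = l + m))
        = (\<Sum>l. Poly_Mapping.lookup p l * c when l = t - m)"
      by (intro Sum_any.cong) (simp add: when_def)
    thus ?thesis using True by simp
  next
    case False
    have "t \<noteq> l + m" for l
      using False by (auto simp: le_fun_def lookup_add)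
    thus ?thesis using False by simp
  qed
  finally show ?thesis .
qed


lemma mexp_indicator:
  assumes "finite U" "\<And>u. g u v \<le> 1"
  shows "mexp g U v = (if \<exists>u\<in>U. g u v \<noteq> 0 then 1 else 0)"
proof (cases "\<exists>u\<in>U. g u v \<noteq> 0")
  case True
  then obtain u where "u \<in> U" "g u v = 1" using assms(2) by (metis le_neq_implies_less less_one)
  hence "Max (insert 0 ((\<lambda>u. g u v) ` U)) = 1"
    using assms by (intro Max_eqI) (auto intro: rev_image_eqI)
  thus ?thesis using True by (simp add: mexp_def)
next
  case False
  hence "insert 0 ((\<lambda>u. g u v) ` U) = {0}" by auto
  hence "mexp g U v = 0" unfolding mexp_def by (metis Max_singleton)
  thus ?thesis using False by simp
qed

lemma mexp_empty [simp]: "mexp g {} = (\<lambda>v. 0)"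
  by (simp add: mexp_def)

lemma mexp_singleton [simp]: "mexp g {u} = g u"
  by (simp add: mexp_def)

lemma mexp_gI:
  "finite V \<Longrightarrow> mexp gI V v = (if (v = Zv \<and> V \<noteq> {}) \<or> (\<exists>i\<in>V. v = Xv i) then 1 else 0)"
  by (subst mexp_indicator) (auto simp: gI_def)

lemma mexp_gJ:
  "finite W \<Longrightarrow> mexp gJ W v = (if \<exists>p\<in>W. v = Xv (fst p) \<or> v = Yv (fst p) (snd p) then 1 else 0)"
  by (subst mexp_indicator) (auto simp: gJ_def)

lemma mexp_mono:
  assumes "finite U" "U' \<subseteq> U" "\<And>u v. g u v \<le> 1"
  shows "mexp g U' \<le> mexp g U"
  using assms finite_subset[OF assms(2,1)] by (auto simp: le_fun_def mexp_indicator)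

lemma finite_support_mexp_gI: "finite V \<Longrightarrow> finite {v. mexp gI V v \<noteq> 0}"
  by (rule finite_subset[of _ "insert Zv (Xv ` V)"]) (auto simp: mexp_gI split: if_splits)

lemma finite_support_mexp_gJ: "finite W \<Longrightarrow> finite {v. mexp gJ W v \<noteq> 0}"
  by (rule finite_subset[of _ "Xv ` fst ` W \<union> (\<lambda>p. Yv (fst p) (snd p)) ` W"])
    (auto simp: mexp_gJ split: if_splits)

fun cb_exp :: "cb \<Rightarrow> var \<Rightarrow> nat" where
  "cb_exp (CF V) = mexp gI V"
| "cb_exp (CG W) = mexp gJ W"
| "cb_exp (CH W) = (\<lambda>v. mexp gJ W v + (if v = Zv then 1 else 0))"

fun finite_label :: "cb \<Rightarrow> bool" where
  "finite_label (CF V) = finite V"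
| "finite_label (CG W) = finite W"
| "finite_label (CH W) = finite W"

lemma finite_label_cbasis: "b \<in> cbasis n a i \<Longrightarrow> finite_label b"
  by (cases b) (auto simp: CF_mem_cbasis CG_mem_cbasis CH_mem_cbasis split: if_splits
      intro: finite_subset[OF _ finite_GI] finite_subset[OF _ finite_GJ])

lemma finite_support_cb_exp: "finite_label b \<Longrightarrow> finite {v. cb_exp b v \<noteq> 0}"
proof (cases b)
  case (CH W)
  assume "finite_label b"
  hence "finite (insert Zv {v. mexp gJ W v \<noteq> 0})" using CH finite_support_mexp_gJ by simp
  moreover have "{v. cb_exp b v \<noteq> 0} \<subseteq> insert Zv {v. mexp gJ W v \<noteq> 0}" using CH by auto
  ultimately show ?thesis by (rule finite_subset[rotated])
next
  case (CF V)
  assume "finite_label b"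
  thus ?thesis using CF finite_support_mexp_gI[of V] by simp
next
  case (CG W)
  assume "finite_label b"
  thus ?thesis using CG finite_support_mexp_gJ[of W] by simp
qed

definition cb_deg :: "cb \<Rightarrow> var \<Rightarrow>\<^sub>0 nat" where
  "cb_deg b = Abs_poly_mapping (cb_exp b)"

lemma lookup_cb_deg: "finite_label b \<Longrightarrow> Poly_Mapping.lookup (cb_deg b) = cb_exp b"
  unfolding cb_deg_def using finite_support_cb_exp by simp

lemma Abs_poly_mapping_cb_exp_diff:
  assumes "finite_label b" "finite_label b'"
  shows "Abs_poly_mapping (\<lambda>v. cb_exp b v - cb_exp b' v) = cb_deg b - cb_deg b'"
proof (rule poly_mapping_eqI)
  fix k
  have "finite {v. cb_exp b v - cb_exp b' v \<noteq> 0}"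
    by (rule finite_subset[OF _ finite_support_cb_exp[OF assms(1)]]) auto
  thus "Poly_Mapping.lookup (Abs_poly_mapping (\<lambda>v. cb_exp b v - cb_exp b' v)) k
      = Poly_Mapping.lookup (cb_deg b - cb_deg b') k"
    using assms by (simp add: lookup_minus lookup_cb_deg)
qed

lemma neg_one_power_mult_single:
  "((-1::'k::comm_ring_1 qpoly) ^ c) * Poly_Mapping.single M d = Poly_Mapping.single M ((-1) ^ c * d)"
proof -
  have "(-1::'k qpoly) = Poly_Mapping.single 0 (-1)" by (simp add: single_uminus)
  moreover have "(Poly_Mapping.single 0 (-1) :: 'k qpoly) ^ c = Poly_Mapping.single 0 ((-1) ^ c)"
    by (induction c) (simp_all add: mult_single)
  ultimately show ?thesis by (simp add: mult_single)
qed

lemma taylor_entry_eq_single: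
  assumes "finite U" "\<And>u v. g u v \<le> 1" "finite {v. mexp g U v \<noteq> 0}"
  shows "(taylor_entry g U U' :: 'k::field qpoly)
       = Poly_Mapping.single (Abs_poly_mapping (\<lambda>x. mexp g U x - mexp g U' x)) (taylor_coeff U U')"
proof -
  have "finite {x. mexp g U x - mexp g U' x \<noteq> 0}"
    by (rule finite_subset[OF _ assms(3)]) auto
  hence "(taylor_entry g U U' :: 'k qpoly)
      = (\<Sum>u\<in>U. Poly_Mapping.single (Abs_poly_mapping (\<lambda>x. mexp g U x - mexp g U' x))
                  (if U' = U - {u} then taylor_sign U u else 0))"
    unfolding taylor_entry_def
    by (intro sum.cong refl) (auto simp: mono_eq_single neg_one_power_mult_single taylor_sign_def)
  thus ?thesis by (simp add: sum_single taylor_coeff_def)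
qed

lemma Var_eq_single: "(Var v :: 'k::field qpoly) = Poly_Mapping.single (Abs_poly_mapping (\<lambda>x. if x = v then 1 else 0)) 1"
proof -
  have eq: "Abs_poly_mapping (\<lambda>x. if x = v then 1 else 0) = Poly_Mapping.single v 1"
    unfolding single.abs_eq by (rule arg_cong[of _ _ Abs_poly_mapping]) (auto simp: when_def)
  show ?thesis unfolding Var_def eq ..
qed

lemma yW_eq_single:
  assumes "finite W" "W \<noteq> {}"
  shows "(yW W :: 'k::field qpoly)
       = Poly_Mapping.single (Abs_poly_mapping (\<lambda>v. cb_exp (CH W) v - cb_exp (CF (fst ` W)) v)) 1"
proof -
  have "(\<lambda>v. if \<exists>p\<in>W. v = Yv (fst p) (snd p) then 1 else 0) = (\<lambda>v. cb_exp (CH W) v - cb_exp (CF (fst ` W)) v)"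
  proof
    fix v show "(if \<exists>p\<in>W. v = Yv (fst p) (snd p) then 1 else 0) = cb_exp (CH W) v - cb_exp (CF (fst ` W)) v"
      using assms by (cases v) (auto simp: mexp_gI mexp_gJ)
  qed
  moreover have "finite {v. cb_exp (CH W) v - cb_exp (CF (fst ` W)) v \<noteq> 0}"
    by (rule finite_subset[OF _ finite_support_cb_exp[of "CH W"]]) (use assms in auto)
  ultimately show ?thesis unfolding yW_def by (simp add: mono_eq_single)
qed

lemma cdiff_eq_single:
  assumes "b \<in> cbasis n a i" "b' \<in> cbasis n a (i - 1)"
  shows "(cdiff b b' :: 'k::field qpoly) = Poly_Mapping.single (cb_deg b - cb_deg b') (sign_matrix b b')"
proof -
  have fin: "finite_label b" "finite_label b'" using assms finite_label_cbasis by auto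
  have "(cdiff b b' :: 'k qpoly)
      = Poly_Mapping.single (Abs_poly_mapping (\<lambda>v. cb_exp b v - cb_exp b' v)) (sign_matrix b b')"
  proof (cases b)
    case (CF V)
    hence "finite V" using fin by simp
    note taylor = taylor_entry_eq_single[OF this _ finite_support_mexp_gI[OF this], where 'k='k]
    show ?thesis by (cases b') (use CF taylor in \<open>simp_all add: gI_def\<close>)
  next
    case (CG W)
    hence "finite W" using fin by simp
    note taylor = taylor_entry_eq_single[OF this _ finite_support_mexp_gJ[OF this], where 'k='k]
    show ?thesis by (cases b') (use CG taylor in \<open>simp_all add: gJ_def\<close>)
  next
    case (CH W)
    hence W: "finite W" "W \<noteq> {}" using fin assms by (auto simp: CH_mem_cbasis)
    note taylor = taylor_entry_eq_single[OF W(1) _ finite_support_mexp_gJ[OF W(1)], where 'k='k]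
    have "(\<lambda>v. cb_exp (CH W) v - cb_exp (CG W) v) = (\<lambda>v. if v = Zv then 1 else 0)" by auto
    moreover have "(Var Zv :: 'k qpoly) = Poly_Mapping.single (Abs_poly_mapping (\<lambda>v. if v = Zv then 1 else 0)) 1"
      by (rule Var_eq_single)
    moreover have "(\<lambda>v. cb_exp (CH W) v - cb_exp (CH W') v) = (\<lambda>v. mexp gJ W v - mexp gJ W' v)" for W'
      by auto
    ultimately show ?thesis
      by (cases b') (use CH taylor yW_eq_single[OF W, where 'k='k] in \<open>simp_all add: gJ_def Phi_entry_def single_uminus\<close>)
  qed
  thus ?thesis unfolding Abs_poly_mapping_cb_exp_diff[OF fin] .
qed


lemma less_funI:
  fixes f g :: "'a \<Rightarrow> 'b::order"
  assumes "f \<le> g" "f x < g x"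
  shows "f < g"
  using assms by (metis le_funD less_le_not_le)

lemma sign_matrix_CH_nonzero_imp_cb_exp_less:
  assumes W: "finite W" "W \<noteq> {}" and nz: "sign_matrix (CH W) b' \<noteq> (0::'k::comm_ring_1)"
  shows "cb_exp b' < cb_exp (CH W)"
proof -
  obtain w where "w \<in> W" using W by auto
  show ?thesis
  proof (cases b')
    case (CH W')
    then obtain u where "u \<in> W" "W' = W - {u}"
      using nz taylor_coeff_nonzeroD by fastforce
    thus ?thesis using CH W mexp_mono[of W W' gJ]
      by (intro less_funI[of _ _ "Yv (fst u) (snd u)"]) (auto simp: le_fun_def gJ_def mexp_gJ)
  next
    case (CG W')
    hence "W' = W" using nz by (auto split: if_splits)
    thus ?thesis using CG by (intro less_funI[of _ _ Zv]) (auto simp: le_fun_def)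
  next
    case (CF V')
    hence "V' = fst ` W" using nz by (auto split: if_splits)
    moreover have "mexp gI (fst ` W) \<le> cb_exp (CH W)"
    proof (rule le_funI)
      fix v show "mexp gI (fst ` W) v \<le> cb_exp (CH W) v" using W by (cases v) (auto simp: mexp_gI mexp_gJ)
    qed
    ultimately show ?thesis using CF W \<open>w \<in> W\<close>
      by (intro less_funI[of _ _ "Yv (fst w) (snd w)"]) (auto simp: mexp_gI mexp_gJ)
  qed
qed

lemma sign_matrix_nonzero_imp_cb_exp_less:
  assumes "b \<in> cbasis n a i" and nz: "sign_matrix b b' \<noteq> (0::'k::comm_ring_1)"
  shows "cb_exp b' < cb_exp b"
proof (cases b)
  case (CF V)
  hence "finite V" using assms finite_label_cbasis by fastforce
  obtain V' u where "b' = CF V'" "u \<in> V" "V' = V - {u}"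
    using nz CF taylor_coeff_nonzeroD by (cases b') fastforce+
  thus ?thesis using CF \<open>finite V\<close> mexp_mono[of V V' gI]
    by (intro less_funI[of _ _ "Xv u"]) (auto simp: gI_def mexp_gI)
next
  case (CG W)
  hence "finite W" using assms finite_label_cbasis by fastforce
  show ?thesis
  proof (cases b')
    case (CG W')
    then obtain u where "u \<in> W" "W' = W - {u}"
      using nz \<open>b = CG W\<close> taylor_coeff_nonzeroD by fastforce
    thus ?thesis using CG \<open>b = CG W\<close> \<open>finite W\<close> mexp_mono[of W W' gJ]
      by (intro less_funI[of _ _ "Yv (fst u) (snd u)"]) (auto simp: gJ_def mexp_gJ)
  next
    case (CF V')
    moreover have "card W = 1" "V' = {}" using nz \<open>b = CG W\<close> CF by (auto split: if_splits)
    moreover obtain w where "W = {w}" using calculation(2) by (metis card_1_singletonE)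
    ultimately show ?thesis using \<open>b = CG W\<close>
      by (intro less_funI[of _ _ "Xv (fst w)"]) (auto simp: le_fun_def gJ_def)
  qed (use nz CG in simp)
next
  case (CH W)
  hence "finite W" "W \<noteq> {}" using assms finite_label_cbasis by (fastforce simp: CH_mem_cbasis)+
  thus ?thesis using sign_matrix_CH_nonzero_imp_cb_exp_less nz CH by blast
qed

lemma sign_matrix_nonzero_imp_cb_exp_le:
  "b \<in> cbasis n a i \<Longrightarrow> sign_matrix b b' \<noteq> (0::'k::comm_ring_1) \<Longrightarrow> cb_exp b' \<le> cb_exp b"
  using sign_matrix_nonzero_imp_cb_exp_less by (blast intro: less_imp_le)

theorem cdiff_constant_coeff_zero:
  assumes "b \<in> cbasis n a i" "b' \<in> cbasis n a (i - 1)"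
  shows "Poly_Mapping.lookup (cdiff b b' :: 'k::field qpoly) 0 = 0"
proof (cases "sign_matrix b b' = (0::'k)")
  case False
  have fin: "finite_label b" "finite_label b'" using assms finite_label_cbasis by auto
  have "cb_exp b' < cb_exp b" by (rule sign_matrix_nonzero_imp_cb_exp_less[OF assms(1) False])
  then obtain v where "cb_exp b' v < cb_exp b v" by (meson le_funI less_le_not_le not_le)
  hence "cb_deg b - cb_deg b' \<noteq> 0"
    using fin by (auto simp: poly_mapping_eq_iff lookup_minus lookup_cb_deg fun_eq_iff not_le)
  thus ?thesis by (simp add: cdiff_eq_single[OF assms] lookup_single)
qed (simp add: cdiff_eq_single[OF assms])


section \<open>Strands\<close>

text \<open>The strand of multidegree T: the component x b contributes its coefficient at the
  monomial T - deg b, provided deg b divides T.  Since the differential is monomial, dC acts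
  on strands through the scalar sign matrix.\<close>
definition strand_coeff :: "(var \<Rightarrow>\<^sub>0 nat) \<Rightarrow> (cb \<Rightarrow> 'k::field qpoly) \<Rightarrow> cb \<Rightarrow> 'k" where
  "strand_coeff T x b =
     (if cb_exp b \<le> Poly_Mapping.lookup T then Poly_Mapping.lookup (x b) (T - cb_deg b) else 0)"

definition sign_diff :: "nat \<Rightarrow> (nat \<Rightarrow> nat) \<Rightarrow> nat \<Rightarrow> (cb \<Rightarrow> 'k::comm_ring_1) \<Rightarrow> cb \<Rightarrow> 'k" where
  "sign_diff n a i \<xi> b' =
     (if b' \<in> cbasis n a (i - 1) then (\<Sum>b\<in>cbasis n a i. sign_matrix b b' * \<xi> b) else 0)"

lemma strand_coeff_mult_cdiff:
  fixes x :: "cb \<Rightarrow> 'k::field qpoly"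
  assumes "b \<in> cbasis n a i" "b' \<in> cbasis n a (i - 1)" "cb_exp b' \<le> Poly_Mapping.lookup T"
  shows "Poly_Mapping.lookup (x b * cdiff b b') (T - cb_deg b') = sign_matrix b b' * strand_coeff T x b"
proof (cases "sign_matrix b b' = (0::'k)")
  case False
  have le: "cb_exp b' \<le> cb_exp b"
    using sign_matrix_nonzero_imp_cb_exp_le[OF assms(1) False] .
  have fin: "finite_label b" "finite_label b'" using assms finite_label_cbasis by auto
  have "Poly_Mapping.lookup (cb_deg b - cb_deg b') \<le> Poly_Mapping.lookup (T - cb_deg b')
      \<longleftrightarrow> cb_exp b \<le> Poly_Mapping.lookup T"
    using le assms(3) fin by (auto simp: le_fun_def lookup_minus lookup_cb_deg intro: diff_le_mono)
      (metis diff_le_mono2 le_diff_iff)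
  moreover have "T - cb_deg b' - (cb_deg b - cb_deg b') = T - cb_deg b" if "cb_exp b \<le> Poly_Mapping.lookup T"
    using le that fin by (intro poly_mapping_eqI) (simp add: le_fun_def lookup_minus lookup_cb_deg)
  ultimately show ?thesis
    by (simp add: cdiff_eq_single[OF assms(1,2)] lookup_mult_single strand_coeff_def mult.commute)
qed (simp add: cdiff_eq_single[OF assms(1,2)])

lemma strand_coeff_dC:
  fixes x :: "cb \<Rightarrow> 'k::field qpoly"
  assumes "1 \<le> i"
  shows "strand_coeff T (dC n a i x) b' = sign_diff n a i (strand_coeff T x) b'"
proof (cases "b' \<in> cbasis n a (i - 1) \<and> cb_exp b' \<le> Poly_Mapping.lookup T")
  case True
  hence "strand_coeff T (dC n a i x) b'
      = (\<Sum>b\<in>cbasis n a i. Poly_Mapping.lookup (x b * cdiff b b') (T - cb_deg b'))"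
    by (simp add: strand_coeff_def dC_def lookup_sum)
  thus ?thesis using True by (simp add: strand_coeff_mult_cdiff sign_diff_def)
next
  case False
  show ?thesis
  proof (cases "b' \<in> cbasis n a (i - 1)")
    case b': True
    hence T: "\<not> cb_exp b' \<le> Poly_Mapping.lookup T" using False by blast
    have "sign_matrix b b' * strand_coeff T x b = 0" if "b \<in> cbasis n a i" for b
    proof (cases "sign_matrix b b' = (0::'k)")
      case False
      hence "\<not> cb_exp b \<le> Poly_Mapping.lookup T"
        using sign_matrix_nonzero_imp_cb_exp_le[OF that] T order_trans by blast
      thus ?thesis by (simp add: strand_coeff_def)
    qed simp
    hence "(\<Sum>b\<in>cbasis n a i. sign_matrix b b' * strand_coeff T x b) = 0"
      by (intro sum.neutral) blast
    thus ?thesis using T b' by (simp add: strand_coeff_def sign_diff_def)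
  qed (simp add: strand_coeff_def sign_diff_def dC_def)
qed

lemma strand_coeff_eqD:
  assumes "finite_label b" "\<And>T. strand_coeff T x b = strand_coeff T y b"
  shows "x b = y b"
proof (rule poly_mapping_eqI)
  fix s
  have "cb_exp b \<le> Poly_Mapping.lookup (s + cb_deg b)" and "s + cb_deg b - cb_deg b = s"
    using assms(1) by (auto simp: le_fun_def lookup_add lookup_cb_deg)
  thus "Poly_Mapping.lookup (x b) s = Poly_Mapping.lookup (y b) s"
    using assms(2)[of "s + cb_deg b"] by (simp add: strand_coeff_def)
qed

theorem dC_dC_eq_zero:
  assumes "1 \<le> i"
  shows "dC n a i (dC n a (Suc i) x) = (\<lambda>_. (0::'k::field qpoly))"
proof
  fix b''
  show "dC n a i (dC n a (Suc i) x) b'' = 0"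
  proof (cases "b'' \<in> cbasis n a (i - 1)")
    case True
    show ?thesis
    proof (rule strand_coeff_eqD[of b'' _ "\<lambda>_. 0"])
      fix T
      have "strand_coeff T (dC n a i (dC n a (Suc i) x)) b''
          = (\<Sum>b'\<in>cbasis n a i. sign_matrix b' b'' *
               (\<Sum>b\<in>cbasis n a (Suc i). sign_matrix b b' * strand_coeff T x b))"
        using True assms by (simp add: strand_coeff_dC sign_diff_def)
      also have "\<dots> = (\<Sum>b'\<in>cbasis n a i. \<Sum>b\<in>cbasis n a (Suc i).
                        strand_coeff T x b * (sign_matrix b b' * sign_matrix b' b''))"
        by (simp add: sum_distrib_left algebra_simps)
      also have "\<dots> = (\<Sum>b\<in>cbasis n a (Suc i). strand_coeff T x b *
                        (\<Sum>b'\<in>cbasis n a i. sign_matrix b b' * sign_matrix b' b''))"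
        by (subst sum.swap) (simp add: sum_distrib_left)
      also have "\<dots> = 0"
        by (intro sum.neutral ballI) (simp add: sign_matrix_sq_zero[OF assms _ True])
      finally show "strand_coeff T (dC n a i (dC n a (Suc i) x)) b'' = strand_coeff T (\<lambda>_. 0) b''"
        by (simp add: strand_coeff_def)
    qed (use True finite_label_cbasis in blast)
  qed (simp add: dC_def)
qed


definition supp_x :: "nat \<Rightarrow> (var \<Rightarrow>\<^sub>0 nat) \<Rightarrow> nat set" where
  "supp_x n T = {i\<in>GI n. 1 \<le> Poly_Mapping.lookup T (Xv i)}"

definition supp_xy :: "nat \<Rightarrow> (nat \<Rightarrow> nat) \<Rightarrow> (var \<Rightarrow>\<^sub>0 nat) \<Rightarrow> (nat \<times> nat) set" where
  "supp_xy n a T = {p\<in>GJ n a. 1 \<le> Poly_Mapping.lookup T (Xv (fst p))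
                              \<and> 1 \<le> Poly_Mapping.lookup T (Yv (fst p) (snd p))}"

definition strand_homotopy :: "nat \<Rightarrow> (nat \<Rightarrow> nat) \<Rightarrow> (var \<Rightarrow>\<^sub>0 nat) \<Rightarrow> cb \<Rightarrow> cb \<Rightarrow> 'k::comm_ring_1" where
  "strand_homotopy n a T =
     (if 1 \<le> Poly_Mapping.lookup T Zv then homotopy_z (Min (supp_x n T))
      else homotopy_y (Min (supp_xy n a T)))"

lemma cb_exp_CF_le_iff:
  assumes "finite V"
  shows "cb_exp (CF V) \<le> Poly_Mapping.lookup T
     \<longleftrightarrow> (V \<noteq> {} \<longrightarrow> 1 \<le> Poly_Mapping.lookup T Zv) \<and> (\<forall>i\<in>V. 1 \<le> Poly_Mapping.lookup T (Xv i))"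
proof
  assume le: "cb_exp (CF V) \<le> Poly_Mapping.lookup T"
  have "1 \<le> Poly_Mapping.lookup T (Xv i)" if "i \<in> V" for i
    using le_funD[OF le, of "Xv i"] that assms by (auto simp: mexp_gI)
  moreover have "V \<noteq> {} \<longrightarrow> 1 \<le> Poly_Mapping.lookup T Zv"
    using le_funD[OF le, of Zv] assms by (simp add: mexp_gI split: if_splits)
  ultimately show "(V \<noteq> {} \<longrightarrow> 1 \<le> Poly_Mapping.lookup T Zv) \<and> (\<forall>i\<in>V. 1 \<le> Poly_Mapping.lookup T (Xv i))"
    by blast
qed (use assms in \<open>auto simp: le_fun_def mexp_gI split: var.splits\<close>)

lemma cb_exp_CG_le_iff:
  assumes "finite W"
  shows "cb_exp (CG W) \<le> Poly_Mapping.lookup T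
     \<longleftrightarrow> (\<forall>p\<in>W. 1 \<le> Poly_Mapping.lookup T (Xv (fst p)) \<and> 1 \<le> Poly_Mapping.lookup T (Yv (fst p) (snd p)))"
proof
  assume "cb_exp (CG W) \<le> Poly_Mapping.lookup T"
  hence "\<And>v. mexp gJ W v \<le> Poly_Mapping.lookup T v" by (auto simp: le_fun_def)
  thus "\<forall>p\<in>W. 1 \<le> Poly_Mapping.lookup T (Xv (fst p)) \<and> 1 \<le> Poly_Mapping.lookup T (Yv (fst p) (snd p))"
    using assms by (metis (no_types, lifting) mexp_gJ)
qed (use assms in \<open>auto simp: le_fun_def mexp_gJ\<close>)

lemma cb_exp_CH_le_iff:
  assumes "finite W"
  shows "cb_exp (CH W) \<le> Poly_Mapping.lookup T
     \<longleftrightarrow> 1 \<le> Poly_Mapping.lookup T Zv \<and> cb_exp (CG W) \<le> Poly_Mapping.lookup T"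
  using assms by (auto simp: le_fun_def mexp_gJ)

lemma supp_x_nonempty:
  assumes "1 \<le> i" "b0 \<in> cbasis n a i" "cb_exp b0 \<le> Poly_Mapping.lookup T"
  shows "supp_x n T \<noteq> {}"
proof (cases b0)
  case (CF V)
  hence V: "V \<subseteq> GI n" "V \<noteq> {}" "finite V"
    using assms by (auto simp: CF_mem_cbasis intro: finite_subset[OF _ finite_GI])
  thus ?thesis using assms CF cb_exp_CF_le_iff by (fastforce simp: supp_x_def)
next
  case (CG W)
  hence W: "W \<subseteq> GJ n a" "W \<noteq> {}" "finite W"
    using assms by (auto simp: CG_mem_cbasis intro: finite_subset[OF _ finite_GJ])
  thus ?thesis using assms CG cb_exp_CG_le_iff fst_GJ_subset by (fastforce simp: supp_x_def)
next
  case (CH W)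
  hence W: "W \<subseteq> GJ n a" "W \<noteq> {}" "finite W"
    using assms by (auto simp: CH_mem_cbasis intro: finite_subset[OF _ finite_GJ])
  thus ?thesis using assms CH cb_exp_CH_le_iff cb_exp_CG_le_iff fst_GJ_subset
    by (fastforce simp: supp_x_def)
qed

lemma strand_without_z:
  assumes "1 \<le> i" "b0 \<in> cbasis n a i" "cb_exp b0 \<le> Poly_Mapping.lookup T"
    and "\<not> 1 \<le> Poly_Mapping.lookup T Zv"
  obtains W where "b0 = CG W" "W \<subseteq> supp_xy n a T" "W \<noteq> {}"
proof (cases b0)
  case (CF V)
  hence "V \<noteq> {}" "finite V"
    using assms by (auto simp: CF_mem_cbasis intro: finite_subset[OF _ finite_GI])
  thus ?thesis using assms CF cb_exp_CF_le_iff by blast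
next
  case (CG W)
  hence "W \<subseteq> GJ n a" "W \<noteq> {}" "finite W"
    using assms by (auto simp: CG_mem_cbasis intro: finite_subset[OF _ finite_GJ])
  thus ?thesis using that assms CG cb_exp_CG_le_iff by (force simp: supp_xy_def)
next
  case (CH W)
  hence "finite W" using assms finite_label_cbasis by fastforce
  thus ?thesis using assms CH cb_exp_CH_le_iff by blast
qed


lemma finite_supp_x: "finite (supp_x n T)"
  by (simp add: supp_x_def)

lemma finite_supp_xy: "finite (supp_xy n a T)"
  by (simp add: supp_xy_def)

lemma labels_in_supp_x:
  assumes "b0 \<in> cbasis n a i" "cb_exp b0 \<le> Poly_Mapping.lookup T"
  shows "b0 = CF V \<Longrightarrow> V \<subseteq> supp_x n T" and "b0 = CG W \<Longrightarrow> fst ` W \<subseteq> supp_x n T"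
proof -
  show "V \<subseteq> supp_x n T" if "b0 = CF V"
    using assms that cb_exp_CF_le_iff[of V T] finite_label_cbasis[OF assms(1)]
    by (auto simp: CF_mem_cbasis supp_x_def split: if_splits)
  show "fst ` W \<subseteq> supp_x n T" if "b0 = CG W"
    using assms that cb_exp_CG_le_iff[of W T] finite_label_cbasis[OF assms(1)] fst_GJ_subset[of W n a]
    by (auto simp: CG_mem_cbasis supp_x_def)
qed

lemma strand_homotopy_identity:
  assumes "1 \<le> i" "b0 \<in> cbasis n a i" "cb_exp b0 \<le> Poly_Mapping.lookup T" "b2 \<in> cbasis n a i"
  shows "(\<Sum>b1\<in>cbasis n a (Suc i). strand_homotopy n a T b0 b1 * sign_matrix b1 b2)
       + (\<Sum>b1\<in>cbasis n a (i - 1). sign_matrix b0 b1 * strand_homotopy n a T b1 b2)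
       = (if b0 = b2 then 1 else (0::'k::comm_ring_1))"
proof (cases "1 \<le> Poly_Mapping.lookup T Zv")
  case True
  define i0 where "i0 = Min (supp_x n T)"
  have i0: "i0 \<in> GI n" "\<And>j. j \<in> supp_x n T \<Longrightarrow> i0 \<le> j"
    using Min_in[OF finite_supp_x supp_x_nonempty[OF assms(1-3)]] finite_supp_x
    by (auto simp: i0_def supp_x_def)
  have "(strand_homotopy n a T :: cb \<Rightarrow> cb \<Rightarrow> 'k) = homotopy_z i0" using True by (simp add: strand_homotopy_def i0_def)
  moreover have "(\<Sum>b1\<in>cbasis n a (Suc i). homotopy_z i0 b0 b1 * sign_matrix b1 b2)
      + (\<Sum>b1\<in>cbasis n a (i - 1). sign_matrix b0 b1 * homotopy_z i0 b1 b2)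
      = (if b0 = b2 then 1 else (0::'k))"
  proof (cases b0)
    case (CF V)
    have "i0 \<le> v" if "v \<in> V" for v
      using labels_in_supp_x(1)[OF assms(2,3) CF] i0(2) that by blast
    thus ?thesis unfolding CF by (rule homotopy_z_CF[OF assms(1) assms(2)[unfolded CF] i0(1)])
  next
    case (CG W)
    have "i0 \<le> fst p" if "p \<in> W" for p
      using labels_in_supp_x(2)[OF assms(2,3) CG] i0(2) that by blast
    thus ?thesis unfolding CG by (rule homotopy_z_CG[OF assms(1) assms(2)[unfolded CG] i0(1) _ assms(4)])
  next
    case (CH W)
    show ?thesis unfolding CH by (rule homotopy_z_CH[OF assms(2)[unfolded CH]])
  qed
  ultimately show ?thesis by simp
next
  case False
  obtain W where W: "b0 = CG W" "W \<subseteq> supp_xy n a T" "W \<noteq> {}"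
    using strand_without_z[OF assms(1-3) False] .
  define w0 where "w0 = Min (supp_xy n a T)"
  have "supp_xy n a T \<noteq> {}" using W by blast
  hence "w0 \<in> supp_xy n a T" unfolding w0_def by (rule Min_in[OF finite_supp_xy])
  hence w0: "w0 \<in> GJ n a" "\<And>w. w \<in> W \<Longrightarrow> w0 \<le> w"
    using W(2) finite_supp_xy by (auto simp: w0_def supp_xy_def)
  have "(strand_homotopy n a T :: cb \<Rightarrow> cb \<Rightarrow> 'k) = homotopy_y w0" using False by (simp add: strand_homotopy_def w0_def)
  thus ?thesis unfolding W(1) using homotopy_y_CG[OF assms(1) assms(2)[unfolded W(1)] w0 assms(4)]
    by simp
qed

lemma strand_homotopy_nonzero_imp_le:
  assumes "1 \<le> i" "b0 \<in> cbasis n a i" "cb_exp b0 \<le> Poly_Mapping.lookup T"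
    and nz: "strand_homotopy n a T b0 b \<noteq> (0::'k::comm_ring_1)"
  shows "cb_exp b \<le> Poly_Mapping.lookup T"
proof (cases "1 \<le> Poly_Mapping.lookup T Zv")
  case True
  define i0 where "i0 = Min (supp_x n T)"
  have i0: "i0 \<in> supp_x n T"
    unfolding i0_def using Min_in[OF finite_supp_x supp_x_nonempty[OF assms(1-3)]] .
  have nz': "homotopy_z i0 b0 b \<noteq> (0::'k)" using nz True by (simp add: strand_homotopy_def i0_def)
  have fin: "finite_label b0" using assms(2) finite_label_cbasis by blast
  show ?thesis
  proof (cases b0)
    case (CF V)
    then obtain V' where "b = CF V'" "V' = insert i0 V" using nz' by (cases b) (auto split: if_splits)
    thus ?thesis using assms(3) CF fin cb_exp_CF_le_iff i0 True by (auto simp: supp_x_def)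
  next
    case (CG W)
    have fW: "finite W" using fin CG by simp
    show ?thesis
    proof (cases b)
      case (CF V')
      hence "V' = insert i0 (fst ` W)" using nz' CG by (auto split: if_splits)
      thus ?thesis
        using CF CG assms(3) fW cb_exp_CF_le_iff cb_exp_CG_le_iff[OF fW] i0 True
        by (auto simp: supp_x_def)
    next
      case (CH W')
      hence "W' = W" using nz' CG by (auto split: if_splits)
      thus ?thesis using CH CG assms(3) cb_exp_CH_le_iff[OF fW] True by simp
    qed (use nz' CG in simp)
  qed (use nz' in simp_all)
next
  case False
  obtain W where W: "b0 = CG W" "W \<subseteq> supp_xy n a T" "W \<noteq> {}"
    using strand_without_z[OF assms(1-3) False] .
  define w0 where "w0 = Min (supp_xy n a T)"
  have "supp_xy n a T \<noteq> {}" using W by blast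
  hence w0: "w0 \<in> supp_xy n a T" unfolding w0_def by (rule Min_in[OF finite_supp_xy])
  have "finite W" using W(2) finite_supp_xy by (rule finite_subset)
  have "homotopy_y w0 b0 b \<noteq> (0::'k)" using nz False by (simp add: strand_homotopy_def w0_def)
  then obtain W' where "b = CG W'" "W' = insert w0 W" using W by (cases b) (auto split: if_splits)
  thus ?thesis using W \<open>finite W\<close> cb_exp_CG_le_iff w0 by (auto simp: supp_xy_def)
qed


definition homotopy_map ::
  "nat \<Rightarrow> (nat \<Rightarrow> nat) \<Rightarrow> (var \<Rightarrow>\<^sub>0 nat) \<Rightarrow> nat \<Rightarrow> (cb \<Rightarrow> 'k::comm_ring_1) \<Rightarrow> cb \<Rightarrow> 'k" where
  "homotopy_map n a T j \<xi> b =
     (if b \<in> cbasis n a (Suc j) then (\<Sum>b0\<in>cbasis n a j. \<xi> b0 * strand_homotopy n a T b0 b) else 0)"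

lemma sign_diff_homotopy_map:
  fixes \<xi> :: "cb \<Rightarrow> 'k::comm_ring_1"
  assumes "1 \<le> i" and supp: "\<And>b. \<xi> b \<noteq> 0 \<Longrightarrow> b \<in> cbasis n a i \<and> cb_exp b \<le> Poly_Mapping.lookup T"
  shows "sign_diff n a (Suc i) (homotopy_map n a T i \<xi>) b2
       + homotopy_map n a T (i - 1) (sign_diff n a i \<xi>) b2 = \<xi> b2"
proof (cases "b2 \<in> cbasis n a i")
  case True
  let ?h = "strand_homotopy n a T :: cb \<Rightarrow> cb \<Rightarrow> 'k"
  have "sign_diff n a (Suc i) (homotopy_map n a T i \<xi>) b2
      = (\<Sum>b1\<in>cbasis n a (Suc i). sign_matrix b1 b2 * (\<Sum>b0\<in>cbasis n a i. \<xi> b0 * ?h b0 b1))"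
    using True by (simp add: sign_diff_def homotopy_map_def)
  also have "\<dots> = (\<Sum>b0\<in>cbasis n a i. \<xi> b0 * (\<Sum>b1\<in>cbasis n a (Suc i). ?h b0 b1 * sign_matrix b1 b2))"
    by (simp add: sum_distrib_left algebra_simps sum.swap[of _ "cbasis n a (Suc i)"])
  finally have up: "sign_diff n a (Suc i) (homotopy_map n a T i \<xi>) b2 = \<dots>" .
  have "homotopy_map n a T (i - 1) (sign_diff n a i \<xi>) b2
      = (\<Sum>b1\<in>cbasis n a (i - 1). (\<Sum>b0\<in>cbasis n a i. sign_matrix b0 b1 * \<xi> b0) * ?h b1 b2)"
    using True assms(1) by (simp add: sign_diff_def homotopy_map_def)
  also have "\<dots> = (\<Sum>b0\<in>cbasis n a i. \<xi> b0 * (\<Sum>b1\<in>cbasis n a (i - 1). sign_matrix b0 b1 * ?h b1 b2))"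
    by (simp add: sum_distrib_left sum_distrib_right algebra_simps) (rule sum.swap)
  finally have down: "homotopy_map n a T (i - 1) (sign_diff n a i \<xi>) b2 = \<dots>" .
  have "\<xi> b0 * ((\<Sum>b1\<in>cbasis n a (Suc i). ?h b0 b1 * sign_matrix b1 b2)
               + (\<Sum>b1\<in>cbasis n a (i - 1). sign_matrix b0 b1 * ?h b1 b2))
      = (if b0 = b2 then \<xi> b0 else 0)" for b0
  proof (cases "\<xi> b0 = 0")
    case False
    hence "b0 \<in> cbasis n a i" "cb_exp b0 \<le> Poly_Mapping.lookup T" using supp by auto
    from strand_homotopy_identity[OF assms(1) this True, where 'k='k] show ?thesis by simp
  qed auto
  hence "sign_diff n a (Suc i) (homotopy_map n a T i \<xi>) b2 + homotopy_map n a T (i - 1) (sign_diff n a i \<xi>) b2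
      = (\<Sum>b0\<in>cbasis n a i. if b0 = b2 then \<xi> b0 else 0)"
    unfolding up down sum.distrib[symmetric] distrib_left[symmetric] by simp
  thus ?thesis using True by simp
next
  case False
  hence "\<xi> b2 = 0" using supp by blast
  moreover have "Suc (i - 1) = i" using assms(1) by simp
  ultimately show ?thesis using False by (simp add: sign_diff_def homotopy_map_def)
qed

lemma strand_coeff_nonzeroD:
  assumes "strand_coeff T x b \<noteq> 0" "finite_label b"
  shows "cb_exp b \<le> Poly_Mapping.lookup T" "T \<in> (\<lambda>k. k + cb_deg b) ` Poly_Mapping.keys (x b)"
proof -
  show le: "cb_exp b \<le> Poly_Mapping.lookup T" using assms(1) by (auto simp: strand_coeff_def split: if_splits)
  have "T = (T - cb_deg b) + cb_deg b"
    using le assms(2) by (intro poly_mapping_eqI) (simp add: le_fun_def lookup_add lookup_minus lookup_cb_deg)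
  moreover have "T - cb_deg b \<in> Poly_Mapping.keys (x b)"
    using assms(1) by (simp add: strand_coeff_def in_keys_iff split: if_splits)
  ultimately show "T \<in> (\<lambda>k. k + cb_deg b) ` Poly_Mapping.keys (x b)" by blast
qed

lemma strand_coeff_glue:
  fixes \<eta> :: "(var \<Rightarrow>\<^sub>0 nat) \<Rightarrow> cb \<Rightarrow> 'k::field"
  assumes "finite S" and supp: "\<And>T b. \<eta> T b \<noteq> 0 \<Longrightarrow> T \<in> S \<and> b \<in> B \<and> cb_exp b \<le> Poly_Mapping.lookup T"
    and "\<And>b. b \<in> B \<Longrightarrow> finite_label b"
  obtains y where "\<And>b. b \<notin> B \<Longrightarrow> y b = 0" "\<And>T. strand_coeff T y = \<eta> T"
proof
  define y where "y b = Abs_poly_mapping (\<lambda>s. \<eta> (s + cb_deg b) b)" for b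
  have "finite {s. \<eta> (s + cb_deg b) b \<noteq> 0}" for b
  proof (rule finite_subset)
    show "{s. \<eta> (s + cb_deg b) b \<noteq> 0} \<subseteq> (\<lambda>s. s + cb_deg b) -` S" using supp by auto
  qed (rule finite_vimageI[OF assms(1)], simp add: inj_def)
  hence lookup_y: "Poly_Mapping.lookup (y b) s = \<eta> (s + cb_deg b) b" for b s
    by (simp add: y_def)
  show y0: "y b = 0" if "b \<notin> B" for b
    by (rule poly_mapping_eqI) (use supp that in \<open>auto simp: lookup_y\<close>)
  show "strand_coeff T y = \<eta> T" for T
  proof
    fix b
    show "strand_coeff T y b = \<eta> T b"
    proof (cases "b \<in> B \<and> cb_exp b \<le> Poly_Mapping.lookup T")
      case True
      hence "T - cb_deg b + cb_deg b = T" using assms(3)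
        by (intro poly_mapping_eqI) (simp add: le_fun_def lookup_add lookup_minus lookup_cb_deg)
      thus ?thesis using True by (simp add: strand_coeff_def lookup_y)
    next
      case False
      hence "\<eta> T b = 0" using supp by blast
      moreover have "strand_coeff T y b = 0" using False y0 by (auto simp: strand_coeff_def)
      ultimately show ?thesis by simp
    qed
  qed
qed

lemma in_C_strand_coeff_nonzeroD:
  assumes "in_C n a i x" "strand_coeff T x b \<noteq> 0"
  shows "b \<in> cbasis n a i \<and> cb_exp b \<le> Poly_Mapping.lookup T"
  using assms by (auto simp: strand_coeff_def in_C_def split: if_splits)

lemma homotopy_map_strand_nonzeroD:
  fixes x :: "cb \<Rightarrow> 'k::field qpoly"
  assumes "1 \<le> i" "in_C n a i x" "homotopy_map n a T i (strand_coeff T x) b \<noteq> 0"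
  shows "T \<in> (\<Union>b0\<in>cbasis n a i. (\<lambda>k. k + cb_deg b0) ` Poly_Mapping.keys (x b0))
       \<and> b \<in> cbasis n a (Suc i) \<and> cb_exp b \<le> Poly_Mapping.lookup T"
proof -
  have "b \<in> cbasis n a (Suc i)"
    and "(\<Sum>b0\<in>cbasis n a i. strand_coeff T x b0 * strand_homotopy n a T b0 b) \<noteq> 0"
    using assms(3) by (auto simp: homotopy_map_def split: if_splits)
  moreover obtain b0 where b0: "b0 \<in> cbasis n a i" "strand_coeff T x b0 * strand_homotopy n a T b0 b \<noteq> 0"
    using calculation(2) by (blast dest: sum.not_neutral_contains_not_neutral)
  moreover from b0 have nz: "strand_coeff T x b0 \<noteq> 0" "strand_homotopy n a T b0 b \<noteq> (0::'k)"
    by auto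
  moreover have "T \<in> (\<lambda>k. k + cb_deg b0) ` Poly_Mapping.keys (x b0)"
    using strand_coeff_nonzeroD(2)[OF nz(1) finite_label_cbasis[OF b0(1)]] .
  moreover have "cb_exp b \<le> Poly_Mapping.lookup T"
    using strand_homotopy_nonzero_imp_le[OF assms(1) b0(1) _ nz(2)]
      in_C_strand_coeff_nonzeroD[OF assms(2) nz(1)] by blast
  ultimately show ?thesis by blast
qed

theorem dC_exact:
  fixes x :: "cb \<Rightarrow> 'k::field qpoly"
  assumes "1 \<le> i" "in_C n a i x" "dC n a i x = (\<lambda>_. 0)"
  shows "\<exists>y. in_C n a (Suc i) y \<and> dC n a (Suc i) y = x"
proof -
  define \<eta> where "\<eta> T = homotopy_map n a T i (strand_coeff T x)" for T
  have cycle: "sign_diff n a i (strand_coeff T x) = (\<lambda>_. 0)" for T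
    using strand_coeff_dC[OF assms(1), of T n a x, symmetric] assms(3)
    by (simp add: strand_coeff_def fun_eq_iff)
  have d_eta: "sign_diff n a (Suc i) (\<eta> T) = strand_coeff T x" for T
  proof
    fix b2
    have "sign_diff n a (Suc i) (\<eta> T) b2
        + homotopy_map n a T (i - 1) (sign_diff n a i (strand_coeff T x)) b2 = strand_coeff T x b2"
      unfolding \<eta>_def
      by (rule sign_diff_homotopy_map[where \<xi>="strand_coeff T x", OF assms(1) in_C_strand_coeff_nonzeroD[OF assms(2)]])
    moreover have "homotopy_map n a T (i - 1) (sign_diff n a i (strand_coeff T x)) b2 = 0"
      by (simp add: homotopy_map_def cycle)
    ultimately show "sign_diff n a (Suc i) (\<eta> T) b2 = strand_coeff T x b2" by simp
  qed
  obtain y where y: "\<And>b. b \<notin> cbasis n a (Suc i) \<Longrightarrow> y b = 0" "\<And>T. strand_coeff T y = \<eta> T"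
    by (rule strand_coeff_glue[OF _ homotopy_map_strand_nonzeroD[OF assms(1,2), folded \<eta>_def]])
      (auto intro: finite_label_cbasis)
  have "dC n a (Suc i) y b = x b" for b
  proof (cases "b \<in> cbasis n a i")
    case True
    show ?thesis
      by (rule strand_coeff_eqD[OF finite_label_cbasis[OF True]]) (simp add: strand_coeff_dC y(2) d_eta)
  qed (use assms(2) in \<open>simp add: dC_def in_C_def\<close>)
  thus ?thesis using y(1) by (auto simp: in_C_def)
qed


section \<open>The image of d_1\<close>

lemma taylor_entry_singleton_empty: "(taylor_entry g {u} {} :: 'k::field qpoly) = mono (g u)"
proof -
  have empty: "{v. v = u \<and> v < u} = {}" by auto
  show ?thesis by (simp add: taylor_entry_def empty)
qed

lemma dC_1_CF_empty:
  "dC n a 1 x (CF {}) = (\<Sum>i\<in>GI n. x (CF {i}) * mono (gI i)) + (\<Sum>p\<in>GJ n a. x (CG {p}) * mono (gJ p))"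
proof -
  have "CF -` cbasis n a 1 = (\<lambda>i. {i}) ` GI n" "CG -` cbasis n a 1 = (\<lambda>p. {p}) ` GJ n a"
    "CH -` cbasis n a 1 = {}"
    by (auto simp: CF_mem_cbasis CG_mem_cbasis CH_mem_cbasis card_1_singleton_iff)
  moreover have "CF {} \<in> cbasis n a 0" by (simp add: cbasis_def)
  ultimately show ?thesis
    by (simp add: dC_def sum_cb_split sum.reindex taylor_entry_singleton_empty)
qed

lemma finite_support_gI: "finite {v. gI i v \<noteq> 0}"
  by (rule finite_subset[of _ "{Zv, Xv i}"]) (auto simp: gI_def)

lemma finite_support_gJ: "finite {v. gJ p v \<noteq> 0}"
  by (rule finite_subset[of _ "{Xv (fst p), Yv (fst p) (snd p)}"]) (auto simp: gJ_def)

lemma inj_mono_gI: "inj (\<lambda>i. mono (gI i) :: 'k::field qpoly)"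
proof (rule injI)
  fix i j assume "(mono (gI i) :: 'k qpoly) = mono (gI j)"
  hence "gI i (Xv i) = gI j (Xv i)" using mono_inj[OF finite_support_gI finite_support_gI] by metis
  thus "i = j" by (simp add: gI_def split: if_splits)
qed

lemma inj_mono_gJ: "inj (\<lambda>p. mono (gJ p) :: 'k::field qpoly)"
proof (rule injI)
  fix p q assume "(mono (gJ p) :: 'k qpoly) = mono (gJ q)"
  hence "gJ p (Yv (fst p) (snd p)) = gJ q (Yv (fst p) (snd p))"
    using mono_inj[OF finite_support_gJ finite_support_gJ] by metis
  thus "p = q" by (cases p, cases q) (simp add: gJ_def split: if_splits)
qed

lemma mono_gI_neq_mono_gJ: "(mono (gI i) :: 'k::field qpoly) \<noteq> mono (gJ p)"
proof
  assume "(mono (gI i) :: 'k qpoly) = mono (gJ p)"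
  hence "gI i Zv = gJ p Zv" using mono_inj[OF finite_support_gI finite_support_gJ] by metis
  thus False by (simp add: gI_def gJ_def)
qed

lemma sum_I_Gamma_gens:
  fixes c :: "'k::field qpoly \<Rightarrow> 'k qpoly"
  shows "(\<Sum>s\<in>I_Gamma_gens n a. c s * s)
     = (\<Sum>i\<in>GI n. c (mono (gI i)) * mono (gI i)) + (\<Sum>p\<in>GJ n a. c (mono (gJ p)) * mono (gJ p))"
proof -
  have "(\<lambda>i. mono (gI i) :: 'k qpoly) ` GI n \<inter> (\<lambda>p. mono (gJ p)) ` GJ n a = {}"
    using mono_gI_neq_mono_gJ by blast
  hence "(\<Sum>s\<in>I_Gamma_gens n a. c s * s) = (\<Sum>s\<in>(\<lambda>i. mono (gI i) :: 'k qpoly) ` GI n. c s * s)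
      + (\<Sum>s\<in>(\<lambda>p. mono (gJ p)) ` GJ n a. c s * s)"
    unfolding I_Gamma_gens_def by (intro sum.union_disjoint) simp_all
  thus ?thesis
    by (simp add: sum.reindex[OF inj_on_subset[OF inj_mono_gI subset_UNIV]]
        sum.reindex[OF inj_on_subset[OF inj_mono_gJ subset_UNIV]])
qed

theorem image_dC_1:
  "{dC n a 1 x (CF {}) | x::cb \<Rightarrow> 'k::field qpoly. True} = ideal_gen (I_Gamma_gens n a)"
proof (intro equalityI subsetI)
  fix p :: "'k qpoly" assume "p \<in> {dC n a 1 x (CF {}) | x::cb \<Rightarrow> 'k qpoly. True}"
  then obtain x :: "cb \<Rightarrow> 'k qpoly" where p: "p = dC n a 1 x (CF {})" by blast
  define c where "c s = (if s \<in> range (\<lambda>i. mono (gI i))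
                          then x (CF {inv (\<lambda>i. mono (gI i) :: 'k qpoly) s})
                          else x (CG {inv (\<lambda>p. mono (gJ p) :: 'k qpoly) s}))" for s
  have "c (mono (gI i)) = x (CF {i})" for i
    by (simp add: c_def inv_f_f[OF inj_mono_gI])
  moreover have "c (mono (gJ q)) = x (CG {q})" for q
  proof -
    have "mono (gJ q) \<notin> range (\<lambda>i. mono (gI i) :: 'k qpoly)"
      using mono_gI_neq_mono_gJ[where 'k='k] by (metis rangeE)
    thus ?thesis by (simp add: c_def inv_f_f[OF inj_mono_gJ])
  qed
  ultimately have "p = (\<Sum>s\<in>I_Gamma_gens n a. c s * s)"
    unfolding p dC_1_CF_empty sum_I_Gamma_gens by simp
  thus "p \<in> ideal_gen (I_Gamma_gens n a)" unfolding ideal_gen_def by blast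
next
  fix p :: "'k qpoly" assume "p \<in> ideal_gen (I_Gamma_gens n a)"
  then obtain c where p: "p = (\<Sum>s\<in>I_Gamma_gens n a. c s * s)" unfolding ideal_gen_def by blast
  define x where "x b = (case b of CF V \<Rightarrow> c (mono (gI (the_elem V)))
                                | CG W \<Rightarrow> c (mono (gJ (the_elem W))) | CH W \<Rightarrow> 0)" for b
  have "p = dC n a 1 x (CF {})" unfolding p dC_1_CF_empty sum_I_Gamma_gens by (simp add: x_def)
  thus "p \<in> {dC n a 1 x (CF {}) | x::cb \<Rightarrow> 'k qpoly. True}" by blast
qed


theorem mainTheorem7:
  fixes n :: nat and a :: "nat \<Rightarrow> nat"
  assumes "1 \<le> n"
  shows
    \<comment> \<open>each C_i is a finitely generated free Q-module\<close>
    "(\<forall>i. finite (cbasis n a i))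
     \<comment> \<open>C is a complex: d_i o d_(i+1) = 0\<close>
     \<and> (\<forall>i\<ge>1. \<forall>x::cb \<Rightarrow> 'k::field qpoly.
           in_C n a (Suc i) x \<longrightarrow> dC n a i (dC n a (Suc i) x) = (\<lambda>_. 0))
     \<comment> \<open>exactness at C_i for i >= 1\<close>
     \<and> (\<forall>i\<ge>1. \<forall>x::cb \<Rightarrow> 'k qpoly. in_C n a i x \<and> dC n a i x = (\<lambda>_. 0) \<longrightarrow>
           (\<exists>y. in_C n a (Suc i) y \<and> dC n a (Suc i) y = x))
     \<comment> \<open>H_0(C) = Q / I_Gamma: the image of d_1 in C_0 = Q is I_Gamma\<close>
     \<and> {dC n a 1 x (CF {}) | x::cb \<Rightarrow> 'k qpoly. True} = ideal_gen (I_Gamma_gens n a)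
     \<comment> \<open>minimality: all entries of the differentials lie in the homogeneous maximal ideal\<close>
     \<and> (\<forall>i\<ge>1. \<forall>b\<in>cbasis n a i. \<forall>b'\<in>cbasis n a (i - 1).
           Poly_Mapping.lookup (cdiff b b' :: 'k qpoly) 0 = 0)"
proof (intro conjI)
  show "\<forall>i. finite (cbasis n a i)" by simp
  show "\<forall>i\<ge>1. \<forall>x::cb \<Rightarrow> 'k qpoly. in_C n a (Suc i) x \<longrightarrow> dC n a i (dC n a (Suc i) x) = (\<lambda>_. 0)"
    using dC_dC_eq_zero by blast
  show "\<forall>i\<ge>1. \<forall>x::cb \<Rightarrow> 'k qpoly. in_C n a i x \<and> dC n a i x = (\<lambda>_. 0) \<longrightarrow>
          (\<exists>y. in_C n a (Suc i) y \<and> dC n a (Suc i) y = x)"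
    using dC_exact by blast
  show "{dC n a 1 x (CF {}) | x::cb \<Rightarrow> 'k qpoly. True} = ideal_gen (I_Gamma_gens n a)"
    by (rule image_dC_1)
  show "\<forall>i\<ge>1. \<forall>b\<in>cbasis n a i. \<forall>b'\<in>cbasis n a (i - 1).
          Poly_Mapping.lookup (cdiff b b' :: 'k qpoly) 0 = 0"
    using cdiff_constant_coeff_zero by blast
qed

end
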